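(* Let $X$ be a BMC with kernel $\mathcal P$ and initial distribution $\nu$ such that Assumptions (F) and (F2) hold with $\alpha\in(0,1/\sqrt2)$, and let $\mathfrak f=(f_\ell,\ell\in\mathbb N)$ be a sequence in $F$ such that there is $g\in F$ with $|\mathcal Q^nf_\ell|\le g$ and $|\mathcal Q^nf_\ell-\langle\mu,f_\ell\rangle|\le\alpha^ng$ for all $n,\ell$. With $(p_n)$ and $N_{n,i}(\mathfrak f)$ as in the context, let $R_2(n)=\sum_{i\in\mathbb G_{n-p_n}}\mathbb E[N_{n,i}(\mathfrak f)\mid X_i]^2$. Then $\lim_{n\to\infty}\mathbb E[R_2(n)]=0$.
   Context: Let $(S,\mathscr S)$ be a measurable space. Let $\mathbb G_0=\{\emptyset\}$, $\mathbb G_k=\{0,1\}^k$ (words of length $k$), $\mathbb T_n=\bigcup_{r=0}^n\mathbb G_r$, $\mathbb T=\bigcup_{r\ge0}\mathbb G_r$; for $i\in\mathbb T$, $|i|$ is its length, $ij$ concatenation, $iA=\{ij:j\in A\}$; $|\mathbb G_n|=2^n$. Let $\mathcal P$ be a probability kernel from $S$ to $S^2$ and $\nu$ a probability measure on $S$. For $g:S^3\to\mathbb R$, $\mathcal Pg(x)=\int g(x,y,z)\mathcal P(x,dy,dz)$, and for $h:S^2\to\mathbb R$, $\mathcal Ph(x)=\int h(y,z)\mathcal P(x,dy,dz)$. A BMC with initial distribution $\nu$ and kernel $\mathcal P$ is a process $X=(X_i,i\in\mathbb T)$ with $X_\emptyset\sim\nu$ such that for all $k\ge0$ and bounded measurable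 $g_i:S^3\to\mathbb R$, $\mathbb E[\prod_{i\in\mathbb G_k}g_i(X_i,X_{i0},X_{i1})\mid\sigma(X_j,j\in\mathbb T_k)]=\prod_{i\in\mathbb G_k}\mathcal Pg_i(X_i)$. Let $\mathcal Q(x,A)=\frac12(\mathcal P(x,A\times S)+\mathcal P(x,S\times A))$, $\mathcal Qf(x)=\int f(y)\mathcal Q(x,dy)$, $\mathcal Q^n$ its iterates. Notation: $(f\otimes g)(x,y)=f(x)g(y)$, $\langle\mu,f\rangle=\int f\,d\mu$, $\tilde f=f-\langle\mu,f\rangle$, $M_A(f)=\sum_{i\in A}f(X_i)$. Assumption (F): $F$ is a set of real measurable functions on $S$ such that (i) $F$ is a vector space containing the constants; (ii) $f\in F\Rightarrow f^2\in F$; (iii) $F\subset L^1(\nu)$; (iv) for all $f_0,f_1\in F$ and $x\in S$, $f_0\otimes f_1\in L^1(\mathcal P(x,\cdot))$ and $\mathcal P(f_0\otimes f_1)\in F$. Assumption (F2): there exist a probability measure $\mu$ on $S$ (invariant for $\mathcal Q$) with $F\subset L^1(\mu)$ and $\alpha\in(0,1)$ such that for every $f\in F$ there is $g\in F$ with $|\mathcal Q^nf-\langle\mu,f\rangle|\le\alpha^ng$ for all $n$. The sequence $(p_n,n\in\mathbb N)$ is a non-decreasing sequence of positive integers with $p_n<n$, $\lim_n p_n/n=1$, and $\lim_n(n-p_n-\lambda\log n)=+\infty$ for every $\lambda>0$. For $n\in\mathbb N$ and $i\in\mathbb T_n$, $N_{n,i}(\mathfrak f)=|\mathbb G_n|^{-1/2}\sum_{\ell=0}^{n-|i|}M_{i\mathbb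 G_{n-|i|-\ell}}(\tilde f_\ell)$. *)

theory Defs
  imports "HOL-Probability.Probability"
begin

text \<open>Words on the binary tree: bool lists; child i0 = i @ [False], i1 = i @ [True].\<close>

definition Gen :: "nat \<Rightarrow> bool list set" where
  "Gen k = {w. length w = k}"

definition Tn :: "nat \<Rightarrow> bool list set" where
  "Tn k = {w. length w \<le> k}"

definition Pop3 :: "('s \<Rightarrow> ('s \<times> 's) measure) \<Rightarrow> ('s \<times> 's \<times> 's \<Rightarrow> real) \<Rightarrow> 's \<Rightarrow> real" where
  "Pop3 P g x = (\<integral> yz. g (x, fst yz, snd yz) \<partial>(P x))"

definition Pop2 :: "('s \<Rightarrow> ('s \<times> 's) measure) \<Rightarrow> ('s \<times> 's \<Rightarrow> real) \<Rightarrow> 's \<Rightarrow> real" where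
  "Pop2 P h x = (\<integral> yz. h yz \<partial>(P x))"

definition Qk :: "'s measure \<Rightarrow> ('s \<Rightarrow> ('s \<times> 's) measure) \<Rightarrow> 's \<Rightarrow> 's measure" where
  "Qk S P x = measure_of (space S) (sets S)
     (\<lambda>A. (emeasure (P x) (A \<times> space S) + emeasure (P x) (space S \<times> A)) / 2)"

definition Qop :: "'s measure \<Rightarrow> ('s \<Rightarrow> ('s \<times> 's) measure) \<Rightarrow> ('s \<Rightarrow> real) \<Rightarrow> 's \<Rightarrow> real" where
  "Qop S P f x = (\<integral> y. f y \<partial>(Qk S P x))"

definition hist :: "'w measure \<Rightarrow> 's measure \<Rightarrow> (bool list \<Rightarrow> 'w \<Rightarrow> 's) \<Rightarrow> nat \<Rightarrow> 'w measure" where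
  "hist M S X k = sigma (space M) (\<Union>j\<in>Tn k. {X j -` A \<inter> space M | A. A \<in> sets S})"

definition BMC :: "'w measure \<Rightarrow> 's measure \<Rightarrow> 's measure \<Rightarrow> ('s \<Rightarrow> ('s \<times> 's) measure)
    \<Rightarrow> (bool list \<Rightarrow> 'w \<Rightarrow> 's) \<Rightarrow> bool" where
  "BMC M S \<nu> P X \<longleftrightarrow>
     prob_space M \<and>
     (\<forall>i. X i \<in> M \<rightarrow>\<^sub>M S) \<and>
     distr M S (X []) = \<nu> \<and>
     (\<forall>k (g :: bool list \<Rightarrow> 's \<times> 's \<times> 's \<Rightarrow> real).
        (\<forall>i\<in>Gen k. g i \<in> borel_measurable (S \<Otimes>\<^sub>M S \<Otimes>\<^sub>M S) \<and> (\<exists>B. \<forall>t. \<bar>g i t\<bar> \<le> B)) \<longrightarrow>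
        (AE \<omega> in M.
           real_cond_exp M (hist M S X k)
             (\<lambda>\<omega>. \<Prod>i\<in>Gen k. g i (X i \<omega>, X (i @ [False]) \<omega>, X (i @ [True]) \<omega>)) \<omega>
           = (\<Prod>i\<in>Gen k. Pop3 P (g i) (X i \<omega>))))"

definition assumption_F :: "'s measure \<Rightarrow> 's measure \<Rightarrow> ('s \<Rightarrow> ('s \<times> 's) measure)
    \<Rightarrow> ('s \<Rightarrow> real) set \<Rightarrow> bool" where
  "assumption_F S \<nu> P F \<longleftrightarrow>
     F \<subseteq> borel_measurable S \<and>
     (\<forall>c::real. (\<lambda>_. c) \<in> F) \<and>
     (\<forall>f\<in>F. \<forall>h\<in>F. (\<lambda>x. f x + h x) \<in> F) \<and>
     (\<forall>f\<in>F. \<forall>c::real. (\<lambda>x. c * f x) \<in> F) \<and>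
     (\<forall>f\<in>F. (\<lambda>x. (f x)\<^sup>2) \<in> F) \<and>
     (\<forall>f\<in>F. integrable \<nu> f) \<and>
     (\<forall>f0\<in>F. \<forall>f1\<in>F.
        (\<forall>x\<in>space S. integrable (P x) (\<lambda>yz. f0 (fst yz) * f1 (snd yz))) \<and>
        Pop2 P (\<lambda>yz. f0 (fst yz) * f1 (snd yz)) \<in> F)"

definition assumption_F2 :: "'s measure \<Rightarrow> ('s \<Rightarrow> ('s \<times> 's) measure)
    \<Rightarrow> ('s \<Rightarrow> real) set \<Rightarrow> 's measure \<Rightarrow> real \<Rightarrow> bool" where
  "assumption_F2 S P F \<mu> \<alpha> \<longleftrightarrow>
     prob_space \<mu> \<and> sets \<mu> = sets S \<and>
     (\<forall>A\<in>sets S. (\<integral> x. measure (Qk S P x) A \<partial>\<mu>) = measure \<mu> A) \<and>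
     (\<forall>f\<in>F. integrable \<mu> f) \<and>
     0 < \<alpha> \<and> \<alpha> < 1 \<and>
     (\<forall>f\<in>F. \<exists>g\<in>F. \<forall>n. \<forall>x\<in>space S.
        \<bar>(Qop S P ^^ n) f x - (\<integral> y. f y \<partial>\<mu>)\<bar> \<le> \<alpha> ^ n * g x)"

definition MA :: "(bool list \<Rightarrow> 'w \<Rightarrow> 's) \<Rightarrow> bool list set \<Rightarrow> ('s \<Rightarrow> real) \<Rightarrow> 'w \<Rightarrow> real" where
  "MA X A f \<omega> = (\<Sum>j\<in>A. f (X j \<omega>))"

definition Nni :: "'s measure \<Rightarrow> (bool list \<Rightarrow> 'w \<Rightarrow> 's) \<Rightarrow> (nat \<Rightarrow> 's \<Rightarrow> real)
    \<Rightarrow> nat \<Rightarrow> bool list \<Rightarrow> 'w \<Rightarrow> real" where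
  "Nni \<mu> X f n i \<omega> = (1 / sqrt ((2::real) ^ n)) *
     (\<Sum>l\<in>{0..n - length i}.
        MA X ((\<lambda>j. i @ j) ` Gen (n - length i - l)) (\<lambda>x. f l x - (\<integral> y. f l y \<partial>\<mu>)) \<omega>)"

definition R2 :: "'w measure \<Rightarrow> 's measure \<Rightarrow> 's measure \<Rightarrow> (bool list \<Rightarrow> 'w \<Rightarrow> 's)
    \<Rightarrow> (nat \<Rightarrow> 's \<Rightarrow> real) \<Rightarrow> (nat \<Rightarrow> nat) \<Rightarrow> nat \<Rightarrow> 'w \<Rightarrow> real" where
  "R2 M S \<mu> X f p n \<omega> = (\<Sum>i\<in>Gen (n - p n).
      (real_cond_exp M (vimage_algebra (space M) (X i) S) (Nni \<mu> X f n i) \<omega>)\<^sup>2)"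

end

theory Submission
  imports Defs
begin

text \<open>
  Conditioning on X_i, the Markov property of the branching chain turns the sum of f(X_ij)
  over the 2^m descendants ij, j in G_m, into 2^m (Q^m f)(X_i). Hence, for i in G_(n-p_n)
  and q = p_n, E[N_(n,i) | X_i] = 2^(-n/2) sum_(l<=q) 2^(q-l) (Q^(q-l) f_l - <mu,f_l>)(X_i),
  and geometric ergodicity bounds its square by 2^(-n) (q+1)^2 theta^(2q) g(X_i)^2 with
  theta = max (2 alpha) 1. The same Markov property gives
  E sum_(i in G_k) g(X_i)^2 = 2^k <nu, Q^k g^2> <= 2^k C, so
  E R_2(n) <= C (p_n+1)^2 (theta^2/2)^(p_n), which tends to 0 because alpha < 1/sqrt 2
  forces theta^2 < 2, and p_n tends to infinity.
\<close>

lemma Gen_eq_lists: "Gen k = {xs. set xs \<subseteq> (UNIV::bool set) \<and> length xs = k}"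
  by (auto simp: Gen_def)

lemma finite_Gen[simp]: "finite (Gen k)"
  unfolding Gen_eq_lists by (rule finite_lists_length_eq) simp

lemma card_Gen: "card (Gen k) = 2 ^ k"
  unfolding Gen_eq_lists by (subst card_lists_length_eq) simp_all

lemma sum_Gen_Suc: "(\<Sum>j\<in>Gen (Suc m). F j) = (\<Sum>j\<in>Gen m. F (j @ [False]) + F (j @ [True]))"
proof -
  have G: "Gen (Suc m) = (\<lambda>j. j @ [False]) ` Gen m \<union> (\<lambda>j. j @ [True]) ` Gen m"
  proof (intro set_eqI iffI)
    fix w assume "w \<in> Gen (Suc m)"
    then have "length w = Suc m" by (simp add: Gen_def)
    then obtain v b where "w = v @ [b]" "length v = m"
      by (metis length_Suc_conv_rev)
    then show "w \<in> (\<lambda>j. j @ [False]) ` Gen m \<union> (\<lambda>j. j @ [True]) ` Gen m"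
      by (cases b) (auto simp: Gen_def)
  qed (auto simp: Gen_def)
  have "(\<Sum>j\<in>Gen (Suc m). F j)
      = (\<Sum>j\<in>(\<lambda>j. j @ [False]) ` Gen m. F j) + (\<Sum>j\<in>(\<lambda>j. j @ [True]) ` Gen m. F j)"
    unfolding G by (rule sum.union_disjoint) auto
  also have "\<dots> = (\<Sum>j\<in>Gen m. F (j @ [False])) + (\<Sum>j\<in>Gen m. F (j @ [True]))"
    by (simp add: sum.reindex inj_on_def)
  finally show ?thesis by (simp add: sum.distrib)
qed

lemma MA_image_append: "MA X ((\<lambda>j. i @ j) ` G) h \<omega> = (\<Sum>j\<in>G. h (X (i @ j) \<omega>))"
  unfolding MA_def by (subst sum.reindex) (auto simp: inj_on_def)

lemma SUP_min_of_nat: "(SUP N. min (x::ennreal) (of_nat N)) = x"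
  using inf_SUP[of x "\<lambda>N. of_nat N" UNIV] by (simp add: inf_min ennreal_SUP_of_nat_eq_top)

lemma incseq_min_of_nat: "incseq (\<lambda>N. min (x::ennreal) (of_nat N))"
  unfolding incseq_def by (intro allI impI min.mono order.refl) simp

lemma nn_integral_SUP_min_of_nat:
  assumes "f \<in> borel_measurable M"
  shows "(\<integral>\<^sup>+ x. f x \<partial>M) = (SUP N. \<integral>\<^sup>+ x. min (f x) (of_nat N) \<partial>M)"
proof -
  have "(\<integral>\<^sup>+ x. f x \<partial>M) = (\<integral>\<^sup>+ x. (SUP N. min (f x) (of_nat N)) \<partial>M)"
    by (simp add: SUP_min_of_nat)
  also have "\<dots> = (SUP N. \<integral>\<^sup>+ x. min (f x) (of_nat N) \<partial>M)"
    using assms incseq_min_of_nat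
    by (intro nn_integral_monotone_convergence_SUP) (auto simp: incseq_def le_fun_def)
  finally show ?thesis .
qed

lemma integral_eq_if_nn_integral_eq:
  fixes u v :: "_ \<Rightarrow> real"
  assumes "integrable M u" "integrable M v" "\<And>\<omega>. 0 \<le> u \<omega>" "\<And>\<omega>. 0 \<le> v \<omega>"
    and "(\<integral>\<^sup>+ \<omega>. ennreal (u \<omega>) \<partial>M) = (\<integral>\<^sup>+ \<omega>. ennreal (v \<omega>) \<partial>M)"
  shows "(\<integral> \<omega>. u \<omega> \<partial>M) = (\<integral> \<omega>. v \<omega> \<partial>M)"
proof -
  have "ennreal (\<integral> \<omega>. u \<omega> \<partial>M) = ennreal (\<integral> \<omega>. v \<omega> \<partial>M)"
    using assms by (simp add: nn_integral_eq_integral[symmetric])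
  then show ?thesis using assms by (simp add: integral_nonneg_AE)
qed

lemma square_weighted_geometric_sum_le:
  fixes a :: "nat \<Rightarrow> real"
  assumes a: "\<And>l. l \<le> q \<Longrightarrow> \<bar>a l\<bar> \<le> \<alpha> ^ (q - l) * G" and "0 \<le> \<alpha>" "0 \<le> G"
  shows "((1 / sqrt (2 ^ n)) * (\<Sum>l\<in>{0..q}. 2 ^ (q - l) * a l))\<^sup>2
     \<le> (real q + 1)\<^sup>2 * max (2 * \<alpha>) 1 ^ (2 * q) / 2 ^ n * G\<^sup>2"
proof -
  define \<theta> where "\<theta> = max (2 * \<alpha>) 1"
  have term_le: "\<bar>2 ^ (q - l) * a l\<bar> \<le> \<theta> ^ q * G" if "l \<le> q" for l
  proof -
    have "\<bar>2 ^ (q - l) * a l\<bar> \<le> 2 ^ (q - l) * (\<alpha> ^ (q - l) * G)"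
      using a[OF that] by (simp add: abs_mult)
    also have "\<dots> = (2 * \<alpha>) ^ (q - l) * G" by (simp add: power_mult_distrib)
    also have "\<dots> \<le> \<theta> ^ (q - l) * G"
      using assms by (intro mult_right_mono power_mono) (auto simp: \<theta>_def)
    also have "\<dots> \<le> \<theta> ^ q * G"
      using assms by (intro mult_right_mono power_increasing) (auto simp: \<theta>_def)
    finally show ?thesis .
  qed
  have "\<bar>\<Sum>l\<in>{0..q}. 2 ^ (q - l) * a l\<bar> \<le> (\<Sum>l\<in>{0..q}. \<theta> ^ q * G)"
    using term_le by (intro order_trans[OF sum_abs sum_mono]) auto
  also have "\<dots> = (real q + 1) * \<theta> ^ q * G" by simp
  finally have sum_le: "\<bar>\<Sum>l\<in>{0..q}. 2 ^ (q - l) * a l\<bar> \<le> (real q + 1) * \<theta> ^ q * G" .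
  have "((1 / sqrt (2 ^ n)) * (\<Sum>l\<in>{0..q}. 2 ^ (q - l) * a l))\<^sup>2
      = (1 / 2 ^ n) * \<bar>\<Sum>l\<in>{0..q}. 2 ^ (q - l) * a l\<bar>\<^sup>2"
    by (simp add: power_mult_distrib power_divide)
  also have "\<dots> \<le> (1 / 2 ^ n) * ((real q + 1) * \<theta> ^ q * G)\<^sup>2"
    using sum_le by (intro mult_left_mono power_mono) auto
  also have "\<dots> = (real q + 1)\<^sup>2 * \<theta> ^ (2 * q) / 2 ^ n * G\<^sup>2"
    by (simp add: power_mult_distrib power_mult[symmetric] mult.commute)
  finally show ?thesis by (simp add: \<theta>_def)
qed

lemma max_double_square_half_less_1:
  fixes \<alpha> :: real
  assumes "0 < \<alpha>" "\<alpha> < 1 / sqrt 2"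
  shows "(max (2 * \<alpha>) 1)\<^sup>2 / 2 < 1"
proof -
  have "\<alpha> * sqrt 2 < 1" using assms by (simp add: field_simps)
  then have "(\<alpha> * sqrt 2)\<^sup>2 < 1\<^sup>2" using assms by (intro power_strict_mono) auto
  then have "(2 * \<alpha>)\<^sup>2 < 2" by (simp add: power_mult_distrib)
  then show ?thesis by (simp add: max_def)
qed

lemma tendsto_square_times_power_0:
  fixes r :: real assumes r: "0 \<le> r" "r < 1"
  shows "(\<lambda>k. C * (real k + 1)\<^sup>2 * r ^ k) \<longlonglongrightarrow> 0"
proof -
  define s where "s = sqrt r"
  have s: "0 \<le> s" "s < 1" using r by (auto simp: s_def)
  have "(\<lambda>k. real k * s ^ k) \<longlonglongrightarrow> 0" using s by (intro powser_times_n_limit_0) auto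
  moreover have "(\<lambda>k. s ^ k) \<longlonglongrightarrow> 0" using s by (intro LIMSEQ_power_zero) auto
  ultimately have "(\<lambda>k. real k * s ^ k + s ^ k) \<longlonglongrightarrow> 0 + 0" by (intro tendsto_add)
  then have "(\<lambda>k. C * ((real k * s ^ k + s ^ k) * (real k * s ^ k + s ^ k))) \<longlonglongrightarrow> C * (0 * 0)"
    by (intro tendsto_mult_left tendsto_mult) auto
  moreover have "C * ((real k * s ^ k + s ^ k) * (real k * s ^ k + s ^ k)) = C * (real k + 1)\<^sup>2 * r ^ k" for k
  proof -
    have "r ^ k = s ^ k * s ^ k"
      using r by (simp add: s_def power_mult_distrib[symmetric] real_sqrt_mult[symmetric])
    then show ?thesis by (simp add: algebra_simps power2_eq_square)
  qed
  ultimately show ?thesis by simp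
qed

lemma filterlim_at_top_if_ratio_tendsto_1:
  assumes "(\<lambda>n. real (p n) / real n) \<longlonglongrightarrow> 1"
  shows "filterlim p at_top sequentially"
  unfolding filterlim_at_top
proof
  fix Z :: nat
  have "eventually (\<lambda>n. real (p n) / real n > 1/2) sequentially"
    using order_tendstoD(1)[OF assms, of "1/2"] by simp
  moreover have "eventually (\<lambda>n. n \<ge> 2 * Z + 1) sequentially" by (rule eventually_ge_at_top)
  ultimately show "eventually (\<lambda>n. Z \<le> p n) sequentially"
  proof eventually_elim
    case (elim n)
    then have "real n / 2 < real (p n)" by (simp add: field_simps)
    then show ?case using elim by linarith
  qed
qed

locale binary_kernel =
  fixes S :: "'s measure" and P :: "'s \<Rightarrow> ('s \<times> 's) measure"
  assumes kernel: "P \<in> S \<rightarrow>\<^sub>M prob_algebra (S \<Otimes>\<^sub>M S)"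
begin

lemma prob_space_P: "x \<in> space S \<Longrightarrow> prob_space (P x)"
  using measurable_space[OF kernel] by (auto simp: space_prob_algebra)

lemma sets_P: "x \<in> space S \<Longrightarrow> sets (P x) = sets (S \<Otimes>\<^sub>M S)"
  using measurable_space[OF kernel] by (auto simp: space_prob_algebra)

lemma space_P: "x \<in> space S \<Longrightarrow> space (P x) = space S \<times> space S"
  using sets_eq_imp_space_eq[OF sets_P] by (simp add: space_pair_measure)

lemma measurable_fst_snd_P:
  assumes "x \<in> space S" shows "fst \<in> P x \<rightarrow>\<^sub>M S" "snd \<in> P x \<rightarrow>\<^sub>M S"
  unfolding measurable_cong_sets[OF sets_P[OF assms] refl] by (rule measurable_fst, rule measurable_snd)

lemma measurable_P_subprob: "P \<in> S \<rightarrow>\<^sub>M subprob_algebra (S \<Otimes>\<^sub>M S)"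
  using kernel by (rule measurable_prob_algebraD)

lemma emeasure_Qk:
  assumes x: "x \<in> space S" and A: "A \<in> sets S"
  shows "emeasure (Qk S P x) A = (emeasure (P x) (A \<times> space S) + emeasure (P x) (space S \<times> A)) / 2"
  unfolding Qk_def
proof (rule emeasure_measure_of_sigma[OF sets.sigma_algebra_axioms _ _ A])
  interpret prob_space "P x" using prob_space_P[OF x] .
  show "positive (sets S) (\<lambda>A. (emeasure (P x) (A \<times> space S) + emeasure (P x) (space S \<times> A)) / 2)"
    by (auto simp: positive_def)
  show "countably_additive (sets S) (\<lambda>A. (emeasure (P x) (A \<times> space S) + emeasure (P x) (space S \<times> A)) / 2)"
    unfolding countably_additive_def
  proof safe
    fix B :: "nat \<Rightarrow> 's set" assume B: "range B \<subseteq> sets S" "disjoint_family B"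
    have sum_fst: "(\<Sum>i. emeasure (P x) (B i \<times> space S)) = emeasure (P x) (\<Union>i. B i \<times> space S)"
      using B sets_P[OF x] by (intro suminf_emeasure) (auto simp: disjoint_family_on_def)
    have sum_snd: "(\<Sum>i. emeasure (P x) (space S \<times> B i)) = emeasure (P x) (\<Union>i. space S \<times> B i)"
      using B sets_P[OF x] by (intro suminf_emeasure) (auto simp: disjoint_family_on_def)
    have split_sum: "(\<Sum>i. (emeasure (P x) (B i \<times> space S) + emeasure (P x) (space S \<times> B i)) / 2)
        = ((\<Sum>i. emeasure (P x) (B i \<times> space S)) + (\<Sum>i. emeasure (P x) (space S \<times> B i))) / 2"
      by (simp add: divide_ennreal_def ennreal_suminf_multc suminf_add)
    have unions: "(\<Union>i. B i \<times> space S) = \<Union>(B ` UNIV) \<times> space S" "(\<Union>i. space S \<times> B i) = space S \<times> \<Union>(B ` UNIV)"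
      by auto
    show "(\<Sum>i. (emeasure (P x) (B i \<times> space S) + emeasure (P x) (space S \<times> B i)) / 2) =
         (emeasure (P x) (\<Union>(B ` UNIV) \<times> space S) + emeasure (P x) (space S \<times> \<Union>(B ` UNIV))) / 2"
      using split_sum unions sum_fst sum_snd by simp
  qed
qed

lemma sets_Qk[simp, measurable_cong]: "sets (Qk S P x) = sets S"
  unfolding Qk_def by (rule sets.sets_measure_of_eq)

lemma space_Qk[simp]: "space (Qk S P x) = space S"
  unfolding Qk_def by (rule sets.space_measure_of_eq)

lemma nn_integral_Qk:
  assumes x: "x \<in> space S" and h: "h \<in> borel_measurable S"
  shows "(\<integral>\<^sup>+ y. h y \<partial>Qk S P x) = ((\<integral>\<^sup>+ yz. h (fst yz) \<partial>P x) + (\<integral>\<^sup>+ yz. h (snd yz) \<partial>P x)) / 2"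
  using h
proof (induct rule: borel_measurable_induct)
  note [measurable] = measurable_fst_snd_P[OF x]
  {
  case (cong f g)
  have "(\<integral>\<^sup>+ y. f y \<partial>Qk S P x) = (\<integral>\<^sup>+ y. g y \<partial>Qk S P x)"
    using cong(3) by (intro nn_integral_cong) simp
  moreover have "(\<integral>\<^sup>+ yz. f (fst yz) \<partial>P x) = (\<integral>\<^sup>+ yz. g (fst yz) \<partial>P x)"
    "(\<integral>\<^sup>+ yz. f (snd yz) \<partial>P x) = (\<integral>\<^sup>+ yz. g (snd yz) \<partial>P x)"
    using cong(3) space_P[OF x] by (intro nn_integral_cong; simp add: mem_Times_iff)+
  ultimately show ?case using cong(4) by simp
  next
  case (set A)
  have "(\<integral>\<^sup>+ yz. indicator A (fst yz) \<partial>P x) = (\<integral>\<^sup>+ yz. indicator (A \<times> space S) yz \<partial>P x)"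
    using space_P[OF x] by (intro nn_integral_cong) (auto simp: indicator_def)
  also have "\<dots> = emeasure (P x) (A \<times> space S)"
    using set sets_P[OF x] by (intro nn_integral_indicator) auto
  finally have fst_eq: "(\<integral>\<^sup>+ yz. indicator A (fst yz) \<partial>P x) = emeasure (P x) (A \<times> space S)" .
  have "(\<integral>\<^sup>+ yz. indicator A (snd yz) \<partial>P x) = (\<integral>\<^sup>+ yz. indicator (space S \<times> A) yz \<partial>P x)"
    using space_P[OF x] by (intro nn_integral_cong) (auto simp: indicator_def)
  also have "\<dots> = emeasure (P x) (space S \<times> A)"
    using set sets_P[OF x] by (intro nn_integral_indicator) auto
  finally have snd_eq: "(\<integral>\<^sup>+ yz. indicator A (snd yz) \<partial>P x) = emeasure (P x) (space S \<times> A)" .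
  show ?case using set unfolding fst_eq snd_eq by (simp add: emeasure_Qk[OF x])
  next
  case (mult u c)
  have "(\<integral>\<^sup>+ y. c * u y \<partial>Qk S P x) = c * (\<integral>\<^sup>+ y. u y \<partial>Qk S P x)"
    "(\<integral>\<^sup>+ yz. c * u (fst yz) \<partial>P x) = c * (\<integral>\<^sup>+ yz. u (fst yz) \<partial>P x)"
    "(\<integral>\<^sup>+ yz. c * u (snd yz) \<partial>P x) = c * (\<integral>\<^sup>+ yz. u (snd yz) \<partial>P x)"
    using mult by (intro nn_integral_cmult; simp)+
  then show ?case using mult by (simp add: ennreal_times_divide distrib_left)
  next
  case (add u v)
  have "(\<integral>\<^sup>+ y. v y + u y \<partial>Qk S P x) = (\<integral>\<^sup>+ y. v y \<partial>Qk S P x) + (\<integral>\<^sup>+ y. u y \<partial>Qk S P x)"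
    "(\<integral>\<^sup>+ yz. v (fst yz) + u (fst yz) \<partial>P x) = (\<integral>\<^sup>+ yz. v (fst yz) \<partial>P x) + (\<integral>\<^sup>+ yz. u (fst yz) \<partial>P x)"
    "(\<integral>\<^sup>+ yz. v (snd yz) + u (snd yz) \<partial>P x) = (\<integral>\<^sup>+ yz. v (snd yz) \<partial>P x) + (\<integral>\<^sup>+ yz. u (snd yz) \<partial>P x)"
    using add by (intro nn_integral_add; simp)+
  then show ?case using add by (simp add: add_divide_distrib_ennreal algebra_simps)
  next
  case (seq U)
  have incseq: "incseq (\<lambda>i. \<integral>\<^sup>+ yz. U i (fst yz) \<partial>P x)" "incseq (\<lambda>i. \<integral>\<^sup>+ yz. U i (snd yz) \<partial>P x)"
    using seq(4) by (auto simp: incseq_def le_fun_def intro!: nn_integral_mono)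
  have "(\<integral>\<^sup>+ y. (SUP i. U i) y \<partial>Qk S P x) = (SUP i. \<integral>\<^sup>+ y. U i y \<partial>Qk S P x)"
    "(\<integral>\<^sup>+ yz. (SUP i. U i) (fst yz) \<partial>P x) = (SUP i. \<integral>\<^sup>+ yz. U i (fst yz) \<partial>P x)"
    "(\<integral>\<^sup>+ yz. (SUP i. U i) (snd yz) \<partial>P x) = (SUP i. \<integral>\<^sup>+ yz. U i (snd yz) \<partial>P x)"
    using seq by (subst SUP_apply, intro nn_integral_monotone_convergence_SUP; auto simp: incseq_def le_fun_def)+
  then show ?case using seq(3) by (simp add: ennreal_SUP_add[OF incseq, symmetric] SUP_divide_ennreal)
  }
qed

text \<open>\<open>Qnn\<close> is the action of \<open>Q\<close> on nonnegative extended-real functions, where no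
  integrability issues arise.\<close>

definition Qnn :: "('s \<Rightarrow> ennreal) \<Rightarrow> 's \<Rightarrow> ennreal" where
  "Qnn h x = (\<integral>\<^sup>+ y. h y \<partial>Qk S P x)"

lemma measurable_nn_integral_P:
  assumes [measurable]: "h \<in> borel_measurable (S \<Otimes>\<^sub>M S \<Otimes>\<^sub>M S)"
  shows "(\<lambda>x. \<integral>\<^sup>+ yz. h (x, fst yz, snd yz) \<partial>P x) \<in> borel_measurable S"
  using measurable_P_subprob
  by (intro nn_integral_measurable_subprob_algebra2[where N="S \<Otimes>\<^sub>M S"]) measurable

lemma measurable_Qnn[measurable]:
  assumes [measurable]: "h \<in> borel_measurable S" shows "Qnn h \<in> borel_measurable S"
proof -
  note [measurable] = measurable_P_subprob
  have "(\<lambda>x. \<integral>\<^sup>+ yz. h (fst yz) \<partial>P x) \<in> borel_measurable S"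
    by (rule nn_integral_measurable_subprob_algebra2[where N="S \<Otimes>\<^sub>M S"]) measurable
  moreover have "(\<lambda>x. \<integral>\<^sup>+ yz. h (snd yz) \<partial>P x) \<in> borel_measurable S"
    by (rule nn_integral_measurable_subprob_algebra2[where N="S \<Otimes>\<^sub>M S"]) measurable
  ultimately have "(\<lambda>x. ((\<integral>\<^sup>+ yz. h (fst yz) \<partial>P x) + (\<integral>\<^sup>+ yz. h (snd yz) \<partial>P x)) / 2) \<in> borel_measurable S"
    by measurable
  then show ?thesis
    by (rule measurable_cong[THEN iffD1, rotated]) (simp add: Qnn_def nn_integral_Qk)
qed

lemma measurable_Qnn_funpow[measurable]: "h \<in> borel_measurable S \<Longrightarrow> (Qnn ^^ m) h \<in> borel_measurable S"
  by (induct m) auto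

lemma nn_integral_P_children:
  assumes x: "x \<in> space S" and h[measurable]: "h \<in> borel_measurable S"
  shows "(\<integral>\<^sup>+ yz. h (fst yz) + h (snd yz) \<partial>P x) = 2 * Qnn h x"
proof -
  note [measurable] = measurable_fst_snd_P[OF x]
  have "(\<integral>\<^sup>+ yz. h (fst yz) + h (snd yz) \<partial>P x) = (\<integral>\<^sup>+ yz. h (fst yz) \<partial>P x) + (\<integral>\<^sup>+ yz. h (snd yz) \<partial>P x)"
    by (rule nn_integral_add) auto
  also have "\<dots> = 2 * Qnn h x"
    unfolding Qnn_def nn_integral_Qk[OF x h] ennreal_times_divide
    using mult_divide_eq_ennreal[of 2 "(\<integral>\<^sup>+ yz. h (fst yz) \<partial>P x) + (\<integral>\<^sup>+ yz. h (snd yz) \<partial>P x)"]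
    by (simp add: mult.commute)
  finally show ?thesis .
qed

lemma Qop_eq_Pop2:
  fixes G :: "'s \<Rightarrow> real"
  assumes x: "x \<in> space S" and G[measurable]: "G \<in> borel_measurable S"
    and int_fst: "integrable (P x) (\<lambda>yz. G (fst yz))" and int_snd: "integrable (P x) (\<lambda>yz. G (snd yz))"
  shows "integrable (Qk S P x) G"
    and "Qop S P G x = (Pop2 P (\<lambda>yz. G (fst yz)) x + Pop2 P (\<lambda>yz. G (snd yz)) x) / 2"
proof -
  note [measurable] = measurable_fst_snd_P[OF x]
  have fin_abs: "(\<integral>\<^sup>+ yz. ennreal (norm (G (fst yz))) \<partial>P x) < \<infinity>"
    "(\<integral>\<^sup>+ yz. ennreal (norm (G (snd yz))) \<partial>P x) < \<infinity>"
    using int_fst int_snd by (auto simp: integrable_iff_bounded)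
  have "(\<integral>\<^sup>+ y. ennreal (norm (G y)) \<partial>Qk S P x) < \<infinity>"
    using fin_abs by (subst nn_integral_Qk[OF x]) (auto simp: ennreal_divide_eq_top_iff less_top[symmetric])
  then show int_Q: "integrable (Qk S P x) G"
    by (auto simp: integrable_iff_bounded)
  have le_abs: "(\<integral>\<^sup>+ yz. ennreal (\<phi> yz) \<partial>N) \<le> (\<integral>\<^sup>+ yz. ennreal \<bar>\<phi> yz\<bar> \<partial>N)"
    "(\<integral>\<^sup>+ yz. ennreal (- \<phi> yz) \<partial>N) \<le> (\<integral>\<^sup>+ yz. ennreal \<bar>\<phi> yz\<bar> \<partial>N)" for \<phi> :: "'s \<times> 's \<Rightarrow> real" and N
    by (intro nn_integral_mono ennreal_leI; simp)+
  have fin: "(\<integral>\<^sup>+ yz. ennreal (G (fst yz)) \<partial>P x) < \<infinity>" "(\<integral>\<^sup>+ yz. ennreal (G (snd yz)) \<partial>P x) < \<infinity>"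
    "(\<integral>\<^sup>+ yz. ennreal (- G (fst yz)) \<partial>P x) < \<infinity>" "(\<integral>\<^sup>+ yz. ennreal (- G (snd yz)) \<partial>P x) < \<infinity>"
    using fin_abs le_less_trans[OF le_abs(1)] le_less_trans[OF le_abs(2)] by auto
  have enn2real_half: "enn2real ((a + b) / 2) = (enn2real a + enn2real b) / 2"
    if "a < \<infinity>" "b < \<infinity>" for a b :: ennreal
    using that by (cases a rule: ennreal_cases; cases b rule: ennreal_cases)
       (auto simp: ennreal_divide_numeral ennreal_plus[symmetric] simp del: ennreal_plus)
  have "Qop S P G x = enn2real (\<integral>\<^sup>+ y. ennreal (G y) \<partial>Qk S P x) - enn2real (\<integral>\<^sup>+ y. ennreal (- G y) \<partial>Qk S P x)"
    unfolding Qop_def by (rule real_lebesgue_integral_def[OF int_Q])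
  also have "\<dots> = (enn2real (\<integral>\<^sup>+ yz. ennreal (G (fst yz)) \<partial>P x) - enn2real (\<integral>\<^sup>+ yz. ennreal (- G (fst yz)) \<partial>P x)
      + (enn2real (\<integral>\<^sup>+ yz. ennreal (G (snd yz)) \<partial>P x) - enn2real (\<integral>\<^sup>+ yz. ennreal (- G (snd yz)) \<partial>P x))) / 2"
    using fin by (simp add: nn_integral_Qk[OF x] enn2real_half diff_divide_distrib add_divide_distrib)
  also have "\<dots> = (Pop2 P (\<lambda>yz. G (fst yz)) x + Pop2 P (\<lambda>yz. G (snd yz)) x) / 2"
    unfolding Pop2_def real_lebesgue_integral_def[OF int_fst] real_lebesgue_integral_def[OF int_snd] ..
  finally show "Qop S P G x = (Pop2 P (\<lambda>yz. G (fst yz)) x + Pop2 P (\<lambda>yz. G (snd yz)) x) / 2" .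
qed

lemma Qop_cong: "(\<And>y. y \<in> space S \<Longrightarrow> H y = H' y) \<Longrightarrow> Qop S P H x = Qop S P H' x"
  unfolding Qop_def by (intro Bochner_Integration.integral_cong) auto

lemma Qop_nonneg: "(\<And>y. y \<in> space S \<Longrightarrow> 0 \<le> H y) \<Longrightarrow> 0 \<le> Qop S P H x"
  unfolding Qop_def by (intro integral_nonneg_AE) auto

lemma Qnn_funpow_mono:
  "(\<And>y. y \<in> space S \<Longrightarrow> H y \<le> H' y) \<Longrightarrow> x \<in> space S \<Longrightarrow> (Qnn ^^ m) H x \<le> (Qnn ^^ m) H' x"
proof (induct m arbitrary: x)
  case (Suc m) then show ?case by (auto simp: Qnn_def intro!: nn_integral_mono)
qed simp

lemma Qop_enn2real_Qnn:
  assumes [measurable]: "h \<in> borel_measurable S" and fin: "\<And>y. y \<in> space S \<Longrightarrow> h y < \<top>"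
    and x: "x \<in> space S" and Qfin: "Qnn h x < \<top>"
  shows "integrable (Qk S P x) (\<lambda>y. enn2real (h y))"
    and "Qop S P (\<lambda>y. enn2real (h y)) x = enn2real (Qnn h x)"
proof -
  have e: "(\<integral>\<^sup>+ y. ennreal (enn2real (h y)) \<partial>Qk S P x) = Qnn h x"
    unfolding Qnn_def using fin by (intro nn_integral_cong) (simp add: less_top)
  show "integrable (Qk S P x) (\<lambda>y. enn2real (h y))"
    by (rule integrableI_bounded) (use e Qfin in auto)
  show "Qop S P (\<lambda>y. enn2real (h y)) x = enn2real (Qnn h x)"
    unfolding Qop_def by (subst integral_eq_nn_integral) (auto simp: e)
qed

end

locale bmc_process = binary_kernel S P for S :: "'s measure" and P +
  fixes M :: "'w measure" and \<nu> :: "'s measure" and X :: "bool list \<Rightarrow> 'w \<Rightarrow> 's"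
  assumes bmc: "BMC M S \<nu> P X"
begin

lemma prob_space_M: "prob_space M" using bmc by (simp add: BMC_def)

lemma measurable_X[measurable]: "X i \<in> M \<rightarrow>\<^sub>M S" using bmc by (simp add: BMC_def)

lemma X_in_space: "\<omega> \<in> space M \<Longrightarrow> X i \<omega> \<in> space S"
  using measurable_space[OF measurable_X] .

definition hist_gen :: "nat \<Rightarrow> 'w set set" where
  "hist_gen k = (\<Union>j\<in>Tn k. {X j -` A \<inter> space M | A. A \<in> sets S})"

lemma hist_gen_subset: "hist_gen k \<subseteq> Pow (space M)" by (auto simp: hist_gen_def)

lemma sets_hist: "sets (hist M S X k) = sigma_sets (space M) (hist_gen k)"
  unfolding hist_def hist_gen_def[symmetric] using hist_gen_subset by (rule sets_measure_of)

lemma space_hist[simp]: "space (hist M S X k) = space M"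
  unfolding hist_def hist_gen_def[symmetric] using hist_gen_subset by (rule space_measure_of)

lemma sets_hist_subset: "sets (hist M S X k) \<subseteq> sets M"
  unfolding sets_hist
  by (rule sets.sigma_sets_subset) (auto simp: hist_gen_def dest: measurable_sets[OF measurable_X])

lemma sigma_finite_subalgebra_hist: "sigma_finite_subalgebra M (hist M S X k)"
proof -
  interpret prob_space M by (rule prob_space_M)
  have "finite_measure_subalgebra M (hist M S X k)"
    by unfold_locales (use sets_hist_subset in \<open>simp add: subalgebra_def\<close>)
  then show ?thesis by (rule finite_measure_subalgebra_is_sigma_finite)
qed

lemma hist_mono: "k \<le> k' \<Longrightarrow> sets (hist M S X k) \<subseteq> sets (hist M S X k')"
  unfolding sets_hist
  by (rule sigma_sets_mono') (auto simp: hist_gen_def Tn_def intro!: exI[where x="_::bool list"] le_trans)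

lemma vimage_X_in_hist: "length j \<le> k \<Longrightarrow> A \<in> sets S \<Longrightarrow> X j -` A \<inter> space M \<in> sets (hist M S X k)"
  unfolding sets_hist by (rule sigma_sets.Basic) (auto simp: hist_gen_def Tn_def)

lemma sets_vimage_X_subset_hist: "sets (vimage_algebra (space M) (X i) S) \<subseteq> sets (hist M S X (length i))"
  using vimage_X_in_hist[of i "length i"] X_in_space by (auto simp: sets_vimage_algebra2 Pi_iff)

lemma Pop3_bounds:
  assumes x: "x \<in> space S" and g[measurable]: "g \<in> borel_measurable (S \<Otimes>\<^sub>M S \<Otimes>\<^sub>M S)"
    and g_bounds: "\<And>t. 0 \<le> g t" "\<And>t. g t \<le> B"
  shows "(\<integral>\<^sup>+ yz. ennreal (g (x, fst yz, snd yz)) \<partial>P x) = ennreal (Pop3 P g x)"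
    and "0 \<le> Pop3 P g x" and "Pop3 P g x \<le> B"
proof -
  interpret prob_space "P x" using prob_space_P[OF x] .
  note [measurable] = measurable_fst_snd_P[OF x]
  have "(\<lambda>yz. g (x, fst yz, snd yz)) \<in> borel_measurable (P x)"
    using x by measurable
  then have int: "integrable (P x) (\<lambda>yz. g (x, fst yz, snd yz))"
    by (rule integrable_const_bound[where B=B, rotated]) (use g_bounds in auto)
  then show "(\<integral>\<^sup>+ yz. ennreal (g (x, fst yz, snd yz)) \<partial>P x) = ennreal (Pop3 P g x)"
    unfolding Pop3_def using g_bounds by (intro nn_integral_eq_integral) auto
  show "0 \<le> Pop3 P g x"
    unfolding Pop3_def using g_bounds by (intro integral_nonneg_AE) auto
  have "Pop3 P g x \<le> (\<integral> yz. B \<partial>P x)"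
    unfolding Pop3_def using int g_bounds by (intro integral_mono) auto
  then show "Pop3 P g x \<le> B" by (simp add: prob_space)
qed

text \<open>The defining property of a BMC, with all factors but one equal to 1.\<close>

lemma real_cond_exp_hist_children:
  assumes i: "length i = k" and g[measurable]: "g \<in> borel_measurable (S \<Otimes>\<^sub>M S \<Otimes>\<^sub>M S)"
    and g_bound: "\<And>t. \<bar>g t\<bar> \<le> B"
  shows "AE \<omega> in M. real_cond_exp M (hist M S X k)
      (\<lambda>\<omega>. g (X i \<omega>, X (i@[False]) \<omega>, X (i@[True]) \<omega>)) \<omega> = Pop3 P g (X i \<omega>)"
proof -
  define G where "G j t = (if j = i then g t else 1)" for j t
  have G_cases: "G i = g" "\<And>j. j \<noteq> i \<Longrightarrow> G j = (\<lambda>_. 1)" by (auto simp: G_def)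
  have i_Gen: "i \<in> Gen k" using i by (simp add: Gen_def)
  have [measurable]: "G j \<in> borel_measurable (S \<Otimes>\<^sub>M S \<Otimes>\<^sub>M S)" for j
    unfolding G_def by measurable
  have "\<forall>j\<in>Gen k. G j \<in> borel_measurable (S \<Otimes>\<^sub>M S \<Otimes>\<^sub>M S) \<and> (\<exists>B. \<forall>t. \<bar>G j t\<bar> \<le> B)"
    using g_bound by (auto simp: G_def le_max_iff_disj intro!: exI[where x="max B 1"])
  then have "AE \<omega> in M. real_cond_exp M (hist M S X k)
             (\<lambda>\<omega>. \<Prod>j\<in>Gen k. G j (X j \<omega>, X (j @ [False]) \<omega>, X (j @ [True]) \<omega>)) \<omega>
           = (\<Prod>j\<in>Gen k. Pop3 P (G j) (X j \<omega>))"
    using bmc unfolding BMC_def by blast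
  moreover have "(\<lambda>\<omega>. \<Prod>j\<in>Gen k. G j (X j \<omega>, X (j @ [False]) \<omega>, X (j @ [True]) \<omega>))
      = (\<lambda>\<omega>. g (X i \<omega>, X (i@[False]) \<omega>, X (i@[True]) \<omega>))"
    using i_Gen by (auto simp: G_def if_distrib cong: if_cong)
  moreover have "(\<Prod>j\<in>Gen k. Pop3 P (G j) (X j \<omega>)) = Pop3 P g (X i \<omega>)" if "\<omega> \<in> space M" for \<omega>
  proof -
    have "Pop3 P (\<lambda>_. 1) (X j \<omega>) = 1" for j
      using prob_space.prob_space[OF prob_space_P[OF X_in_space[OF that]]] by (simp add: Pop3_def)
    then have "(\<Prod>j\<in>Gen k. Pop3 P (G j) (X j \<omega>)) = (\<Prod>j\<in>Gen k. if j = i then Pop3 P g (X i \<omega>) else 1)"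
      by (intro prod.cong) (auto simp: G_cases)
    then show ?thesis using i_Gen by simp
  qed
  ultimately show ?thesis by auto
qed

lemma nn_integral_indicator_children_bounded:
  assumes i: "length i = k" and g[measurable]: "g \<in> borel_measurable (S \<Otimes>\<^sub>M S \<Otimes>\<^sub>M S)"
    and g_bounds: "\<And>t. 0 \<le> g t" "\<And>t. g t \<le> B" and A: "A \<in> sets (hist M S X k)"
  shows "(\<integral>\<^sup>+ \<omega>. indicator A \<omega> * ennreal (g (X i \<omega>, X (i@[False]) \<omega>, X (i@[True]) \<omega>)) \<partial>M)
       = (\<integral>\<^sup>+ \<omega>. indicator A \<omega> * (\<integral>\<^sup>+ yz. ennreal (g (X i \<omega>, fst yz, snd yz)) \<partial>P (X i \<omega>)) \<partial>M)"
proof -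
  interpret prob_space M by (rule prob_space_M)
  interpret sigma_finite_subalgebra M "hist M S X k" by (rule sigma_finite_subalgebra_hist)
  have A_M: "A \<in> sets M" using A sets_hist_subset by auto
  define \<phi> where "\<phi> \<omega> = g (X i \<omega>, X (i@[False]) \<omega>, X (i@[True]) \<omega>)" for \<omega>
  have [measurable]: "\<phi> \<in> borel_measurable M" unfolding \<phi>_def by measurable
  have int_\<phi>: "integrable M \<phi>"
    by (rule integrable_const_bound[where B=B]) (use g_bounds in \<open>auto simp: \<phi>_def\<close>)
  have cond_\<phi>: "AE \<omega> in M. real_cond_exp M (hist M S X k) \<phi> \<omega> = Pop3 P g (X i \<omega>)"
    unfolding \<phi>_def using g_bounds by (intro real_cond_exp_hist_children[OF i g, of B]) auto
  note Pop3_eq = Pop3_bounds[OF _ g g_bounds]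
  have "(\<lambda>x. enn2real (\<integral>\<^sup>+ yz. ennreal (g (x, fst yz, snd yz)) \<partial>P x)) \<in> borel_measurable S"
    using measurable_nn_integral_P[of "\<lambda>t. ennreal (g t)"] by measurable
  then have "(\<lambda>x. Pop3 P g x) \<in> borel_measurable S"
    by (rule measurable_cong[THEN iffD1, rotated]) (simp add: Pop3_eq(1,2) del: prod.collapse)
  then have int_Pop3: "integrable M (\<lambda>\<omega>. Pop3 P g (X i \<omega>))"
    by (intro integrable_const_bound[where B=B]) (auto simp: Pop3_eq X_in_space)
  have "(\<integral> \<omega>. indicator A \<omega> * \<phi> \<omega> \<partial>M) = (\<integral> \<omega>\<in>A. real_cond_exp M (hist M S X k) \<phi> \<omega> \<partial>M)"
    unfolding real_cond_exp_intA[OF int_\<phi> A, symmetric] by (simp add: set_lebesgue_integral_def)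
  also have "\<dots> = (\<integral> \<omega>. indicator A \<omega> * Pop3 P g (X i \<omega>) \<partial>M)"
    unfolding set_lebesgue_integral_def
    using A_M borel_measurable_integrable[OF int_Pop3] by (intro integral_cong_AE) (use cond_\<phi> in auto)
  finally have real_eq: "(\<integral> \<omega>. indicator A \<omega> * \<phi> \<omega> \<partial>M) = (\<integral> \<omega>. indicator A \<omega> * Pop3 P g (X i \<omega>) \<partial>M)" .
  have "(\<integral>\<^sup>+ \<omega>. indicator A \<omega> * ennreal (\<phi> \<omega>) \<partial>M) = (\<integral>\<^sup>+ \<omega>. ennreal (indicator A \<omega> * \<phi> \<omega>) \<partial>M)"
    by (intro nn_integral_cong) (auto simp: indicator_def)
  also have "\<dots> = ennreal (\<integral> \<omega>. indicator A \<omega> * \<phi> \<omega> \<partial>M)"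
    using integrable_mult_indicator[OF A_M int_\<phi>] g_bounds
    by (intro nn_integral_eq_integral) (auto simp: \<phi>_def indicator_def)
  also have "\<dots> = (\<integral>\<^sup>+ \<omega>. ennreal (indicator A \<omega> * Pop3 P g (X i \<omega>)) \<partial>M)"
    unfolding real_eq using integrable_mult_indicator[OF A_M int_Pop3] Pop3_eq X_in_space
    by (intro nn_integral_eq_integral[symmetric]) (auto simp: indicator_def)
  also have "\<dots> = (\<integral>\<^sup>+ \<omega>. indicator A \<omega> * (\<integral>\<^sup>+ yz. ennreal (g (X i \<omega>, fst yz, snd yz)) \<partial>P (X i \<omega>)) \<partial>M)"
    using Pop3_eq X_in_space by (intro nn_integral_cong) (auto simp: indicator_def)
  finally show ?thesis by (simp add: \<phi>_def)
qed

text \<open>The unbounded case follows by truncating \<open>h\<close> at level \<open>N\<close>.\<close>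

lemma nn_integral_indicator_children:
  assumes i: "length i = k" and h[measurable]: "h \<in> borel_measurable (S \<Otimes>\<^sub>M S \<Otimes>\<^sub>M S)"
    and A: "A \<in> sets (hist M S X k)"
  shows "(\<integral>\<^sup>+ \<omega>. indicator A \<omega> * h (X i \<omega>, X (i@[False]) \<omega>, X (i@[True]) \<omega>) \<partial>M)
       = (\<integral>\<^sup>+ \<omega>. indicator A \<omega> * (\<integral>\<^sup>+ yz. h (X i \<omega>, fst yz, snd yz) \<partial>P (X i \<omega>)) \<partial>M)"
proof -
  have [measurable]: "A \<in> sets M" using A sets_hist_subset by auto
  define g where "g N t = enn2real (min (h t) (of_nat N))" for N :: nat and t
  have g_eq: "ennreal (g N t) = min (h t) (of_nat N)" for N t
    by (cases "h t" rule: ennreal_cases) (auto simp: g_def min_def ennreal_of_nat_eq_real_of_nat top_unique)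
  have [measurable]: "g N \<in> borel_measurable (S \<Otimes>\<^sub>M S \<Otimes>\<^sub>M S)" for N
    unfolding g_def by measurable
  have truncated: "(\<integral>\<^sup>+ \<omega>. indicator A \<omega> * min (h (X i \<omega>, X (i@[False]) \<omega>, X (i@[True]) \<omega>)) (of_nat N) \<partial>M)
       = (\<integral>\<^sup>+ \<omega>. indicator A \<omega> * (\<integral>\<^sup>+ yz. min (h (X i \<omega>, fst yz, snd yz)) (of_nat N) \<partial>P (X i \<omega>)) \<partial>M)" for N
    using nn_integral_indicator_children_bounded[OF i _ _ _ A, of "g N" "real N"] unfolding g_eq
    by (auto simp: g_def enn2real_leI min.coboundedI2)
  have lhs: "(\<integral>\<^sup>+ \<omega>. indicator A \<omega> * h (X i \<omega>, X (i@[False]) \<omega>, X (i@[True]) \<omega>) \<partial>M)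
     = (SUP N. \<integral>\<^sup>+ \<omega>. indicator A \<omega> * min (h (X i \<omega>, X (i@[False]) \<omega>, X (i@[True]) \<omega>)) (of_nat N) \<partial>M)"
    by (subst nn_integral_SUP_min_of_nat, measurable)
      (intro SUP_cong nn_integral_cong refl, simp add: indicator_def)
  have inner: "(\<integral>\<^sup>+ yz. h (X i \<omega>, fst yz, snd yz) \<partial>P (X i \<omega>))
      = (SUP N. \<integral>\<^sup>+ yz. min (h (X i \<omega>, fst yz, snd yz)) (of_nat N) \<partial>P (X i \<omega>))" if "\<omega> \<in> space M" for \<omega>
  proof (rule nn_integral_SUP_min_of_nat)
    have x: "X i \<omega> \<in> space S" using X_in_space[OF that] .
    note [measurable] = measurable_fst_snd_P[OF x]
    show "(\<lambda>yz. h (X i \<omega>, fst yz, snd yz)) \<in> borel_measurable (P (X i \<omega>))"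
      using x by measurable
  qed
  have "(\<lambda>\<omega>. \<integral>\<^sup>+ yz. min (h (X i \<omega>, fst yz, snd yz)) (of_nat N) \<partial>P (X i \<omega>)) \<in> borel_measurable M" for N
    using measurable_nn_integral_P[of "\<lambda>t. min (h t) (of_nat N)"] by measurable
  then have rhs: "(\<integral>\<^sup>+ \<omega>. indicator A \<omega> * (\<integral>\<^sup>+ yz. h (X i \<omega>, fst yz, snd yz) \<partial>P (X i \<omega>)) \<partial>M)
     = (SUP N. \<integral>\<^sup>+ \<omega>. indicator A \<omega> * (\<integral>\<^sup>+ yz. min (h (X i \<omega>, fst yz, snd yz)) (of_nat N) \<partial>P (X i \<omega>)) \<partial>M)"
    using inner incseq_min_of_nat
    by (subst nn_integral_monotone_convergence_SUP[symmetric])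
      (auto simp: incseq_def le_fun_def SUP_mult_left_ennreal[symmetric]
        intro!: nn_integral_cong mult_left_mono nn_integral_mono)
  show ?thesis unfolding lhs rhs truncated ..
qed

lemma nn_integral_indicator_subtree:
  assumes "length i = k" and "h \<in> borel_measurable S" and "A \<in> sets (hist M S X k)"
  shows "(\<integral>\<^sup>+ \<omega>. indicator A \<omega> * (\<Sum>j\<in>Gen m. h (X (i @ j) \<omega>)) \<partial>M)
       = (\<integral>\<^sup>+ \<omega>. indicator A \<omega> * (2 ^ m * (Qnn ^^ m) h (X i \<omega>)) \<partial>M)"
  using assms
proof (induct m arbitrary: h)
  case 0
  then show ?case by (simp add: Gen_def)
next
  case (Suc m)
  note h[measurable] = Suc.prems(2)
  have [measurable]: "A \<in> sets M" using Suc.prems(3) sets_hist_subset by auto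
  have A_later: "A \<in> sets (hist M S X (k + m))" using Suc.prems(3) hist_mono[of k "k+m"] by auto
  have children: "(\<integral>\<^sup>+ \<omega>. indicator A \<omega> * (h (X (i @ j @ [False]) \<omega>) + h (X (i @ j @ [True]) \<omega>)) \<partial>M)
      = (\<integral>\<^sup>+ \<omega>. indicator A \<omega> * (2 * Qnn h (X (i @ j) \<omega>)) \<partial>M)" if j: "j \<in> Gen m" for j
  proof -
    have "length (i @ j) = k + m" using j Suc.prems(1) by (simp add: Gen_def)
    from nn_integral_indicator_children[OF this _ A_later, of "\<lambda>t. h (fst (snd t)) + h (snd (snd t))"]
    have "(\<integral>\<^sup>+ \<omega>. indicator A \<omega> * (h (X (i @ j @ [False]) \<omega>) + h (X (i @ j @ [True]) \<omega>)) \<partial>M)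
        = (\<integral>\<^sup>+ \<omega>. indicator A \<omega> * (\<integral>\<^sup>+ yz. h (fst yz) + h (snd yz) \<partial>P (X (i @ j) \<omega>)) \<partial>M)"
      by simp
    also have "\<dots> = (\<integral>\<^sup>+ \<omega>. indicator A \<omega> * (2 * Qnn h (X (i @ j) \<omega>)) \<partial>M)"
      using nn_integral_P_children[OF X_in_space h] by (intro nn_integral_cong) simp
    finally show ?thesis .
  qed
  have "(\<integral>\<^sup>+ \<omega>. indicator A \<omega> * (\<Sum>j\<in>Gen (Suc m). h (X (i @ j) \<omega>)) \<partial>M)
      = (\<integral>\<^sup>+ \<omega>. (\<Sum>j\<in>Gen m. indicator A \<omega> * (h (X (i @ j @ [False]) \<omega>) + h (X (i @ j @ [True]) \<omega>))) \<partial>M)"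
    by (simp add: sum_Gen_Suc sum_distrib_left)
  also have "\<dots> = (\<Sum>j\<in>Gen m. \<integral>\<^sup>+ \<omega>. indicator A \<omega> * (h (X (i @ j @ [False]) \<omega>) + h (X (i @ j @ [True]) \<omega>)) \<partial>M)"
    by (rule nn_integral_sum) measurable
  also have "\<dots> = (\<Sum>j\<in>Gen m. \<integral>\<^sup>+ \<omega>. indicator A \<omega> * (2 * Qnn h (X (i @ j) \<omega>)) \<partial>M)"
    using children by (rule sum.cong[OF refl])
  also have "\<dots> = (\<integral>\<^sup>+ \<omega>. 2 * (indicator A \<omega> * (\<Sum>j\<in>Gen m. Qnn h (X (i @ j) \<omega>))) \<partial>M)"
    by (subst nn_integral_sum[symmetric]) (measurable, simp add: sum_distrib_left mult_ac)
  also have "\<dots> = 2 * (\<integral>\<^sup>+ \<omega>. indicator A \<omega> * (2 ^ m * (Qnn ^^ m) (Qnn h) (X i \<omega>)) \<partial>M)"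
    using Suc.hyps[OF Suc.prems(1) measurable_Qnn[OF h] Suc.prems(3)] by (simp add: nn_integral_cmult)
  also have "\<dots> = (\<integral>\<^sup>+ \<omega>. indicator A \<omega> * (2 ^ Suc m * (Qnn ^^ Suc m) h (X i \<omega>)) \<partial>M)"
    by (subst nn_integral_cmult[symmetric]) (measurable, simp add: funpow_Suc_right mult_ac del: funpow.simps)
  finally show ?case .
qed

lemma nn_integral_generation:
  assumes [measurable]: "h \<in> borel_measurable S"
  shows "(\<integral>\<^sup>+ \<omega>. (\<Sum>j\<in>Gen n. h (X j \<omega>)) \<partial>M) = 2 ^ n * (\<integral>\<^sup>+ x. (Qnn ^^ n) h x \<partial>\<nu>)"
proof -
  have "space M \<in> sets (hist M S X 0)" using sets.top[of "hist M S X 0"] by simp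
  from nn_integral_indicator_subtree[OF _ assms this, of "[]"]
  have "(\<integral>\<^sup>+ \<omega>. (\<Sum>j\<in>Gen n. h (X j \<omega>)) \<partial>M) = (\<integral>\<^sup>+ \<omega>. 2 ^ n * (Qnn ^^ n) h (X [] \<omega>) \<partial>M)"
    by (simp cong: nn_integral_cong)
  also have "\<dots> = 2 ^ n * (\<integral>\<^sup>+ x. (Qnn ^^ n) h x \<partial>distr M S (X []))"
    by (simp add: nn_integral_cmult nn_integral_distr)
  also have "distr M S (X []) = \<nu>" using bmc by (simp add: BMC_def)
  finally show ?thesis .
qed

end

locale bmc_F = bmc_process S P M \<nu> X for S :: "'s measure" and P M \<nu> X +
  fixes F :: "('s \<Rightarrow> real) set"
  assumes F: "assumption_F S \<nu> P F" and sets_nu: "sets \<nu> = sets S" and prob_space_nu: "prob_space \<nu>"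
begin

lemma F_measurable: "G \<in> F \<Longrightarrow> G \<in> borel_measurable S"
  using F by (auto simp: assumption_F_def)

lemma F_add: "G \<in> F \<Longrightarrow> H \<in> F \<Longrightarrow> (\<lambda>x. G x + H x) \<in> F"
  using F by (auto simp: assumption_F_def)

lemma F_cmult: "G \<in> F \<Longrightarrow> (\<lambda>x. c * G x) \<in> F"
  using F by (auto simp: assumption_F_def)

lemma F_square: "G \<in> F \<Longrightarrow> (\<lambda>x. (G x)\<^sup>2) \<in> F"
  using F by (auto simp: assumption_F_def)

lemma F_integrable_nu: "G \<in> F \<Longrightarrow> integrable \<nu> G"
  using F by (auto simp: assumption_F_def)

lemma F_fst_snd:
  assumes G: "G \<in> F"
  shows "\<And>x. x \<in> space S \<Longrightarrow> integrable (P x) (\<lambda>yz. G (fst yz))"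
    and "\<And>x. x \<in> space S \<Longrightarrow> integrable (P x) (\<lambda>yz. G (snd yz))"
    and "Pop2 P (\<lambda>yz. G (fst yz)) \<in> F" and "Pop2 P (\<lambda>yz. G (snd yz)) \<in> F"
proof -
  have one: "(\<lambda>_. 1) \<in> F" using F by (simp add: assumption_F_def)
  have "\<forall>f0\<in>F. \<forall>f1\<in>F. (\<forall>x\<in>space S. integrable (P x) (\<lambda>yz. f0 (fst yz) * f1 (snd yz))) \<and>
        Pop2 P (\<lambda>yz. f0 (fst yz) * f1 (snd yz)) \<in> F"
    using F by (simp add: assumption_F_def)
  from this[rule_format, OF G one] this[rule_format, OF one G]
  show "\<And>x. x \<in> space S \<Longrightarrow> integrable (P x) (\<lambda>yz. G (fst yz))"
    "\<And>x. x \<in> space S \<Longrightarrow> integrable (P x) (\<lambda>yz. G (snd yz))"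
    "Pop2 P (\<lambda>yz. G (fst yz)) \<in> F" "Pop2 P (\<lambda>yz. G (snd yz)) \<in> F" by simp_all
qed

lemma Qop_in_F: assumes G: "G \<in> F" shows "\<exists>G'\<in>F. \<forall>x\<in>space S. Qop S P G x = G' x"
proof (intro bexI ballI)
  show "(\<lambda>x. (1/2) * (Pop2 P (\<lambda>yz. G (fst yz)) x + Pop2 P (\<lambda>yz. G (snd yz)) x)) \<in> F"
    using F_fst_snd[OF G] by (intro F_cmult F_add)
  fix x assume x: "x \<in> space S"
  show "Qop S P G x = (1/2) * (Pop2 P (\<lambda>yz. G (fst yz)) x + Pop2 P (\<lambda>yz. G (snd yz)) x)"
    using Qop_eq_Pop2(2)[OF x F_measurable[OF G] F_fst_snd(1,2)[OF G x]] by simp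
qed

lemma Qop_funpow_in_F: assumes G: "G \<in> F" shows "\<exists>G'\<in>F. \<forall>x\<in>space S. (Qop S P ^^ m) G x = G' x"
proof (induct m)
  case 0 then show ?case using G by auto
next
  case (Suc m)
  then obtain G' where G': "G' \<in> F" "\<forall>x\<in>space S. (Qop S P ^^ m) G x = G' x" by auto
  obtain G'' where G'': "G'' \<in> F" "\<forall>x\<in>space S. Qop S P G' x = G'' x" using Qop_in_F[OF G'(1)] by auto
  show ?case
  proof (intro bexI[OF _ G''(1)] ballI)
    fix x assume "x \<in> space S"
    have "(Qop S P ^^ Suc m) G x = Qop S P G' x"
      unfolding funpow.simps comp_def by (rule Qop_cong) (use G'(2) in auto)
    then show "(Qop S P ^^ Suc m) G x = G'' x" using G''(2) \<open>x \<in> space S\<close> by simp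
  qed
qed

lemma integrable_Qk_Qop_funpow:
  assumes G: "G \<in> F" and x: "x \<in> space S"
  shows "integrable (Qk S P x) ((Qop S P ^^ m) G)"
proof -
  obtain G' where G': "G' \<in> F" "\<forall>x\<in>space S. (Qop S P ^^ m) G x = G' x"
    using Qop_funpow_in_F[OF G] by auto
  have "integrable (Qk S P x) G'"
    using Qop_eq_Pop2(1)[OF x F_measurable[OF G'(1)] F_fst_snd(1,2)[OF G'(1) x]] .
  then show ?thesis
    by (rule Bochner_Integration.integrable_cong[THEN iffD1, rotated 2]) (use G'(2) in auto)
qed

lemma Qnn_funpow_F:
  assumes G: "G \<in> F" and G_nonneg: "\<And>y. y \<in> space S \<Longrightarrow> 0 \<le> G y" and x: "x \<in> space S"
  shows "(Qnn ^^ m) (\<lambda>y. ennreal (G y)) x = ennreal ((Qop S P ^^ m) G x)"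
    and "0 \<le> (Qop S P ^^ m) G x"
proof -
  have "\<forall>x\<in>space S. (Qnn ^^ m) (\<lambda>y. ennreal (G y)) x = ennreal ((Qop S P ^^ m) G x)
      \<and> 0 \<le> (Qop S P ^^ m) G x"
  proof (induct m)
    case 0 then show ?case using G_nonneg by simp
  next
    case (Suc m)
    show ?case
    proof
      fix x assume x: "x \<in> space S"
      have "(Qnn ^^ Suc m) (\<lambda>y. ennreal (G y)) x = (\<integral>\<^sup>+ y. (Qnn ^^ m) (\<lambda>y. ennreal (G y)) y \<partial>Qk S P x)"
        by (simp add: Qnn_def)
      also have "\<dots> = (\<integral>\<^sup>+ y. ennreal ((Qop S P ^^ m) G y) \<partial>Qk S P x)"
        using Suc by (intro nn_integral_cong) auto
      also have "\<dots> = ennreal ((Qop S P ^^ Suc m) G x)"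
        unfolding funpow.simps comp_def Qop_def[of _ _ "(Qop S P ^^ m) G"]
        using Suc integrable_Qk_Qop_funpow[OF G x] by (intro nn_integral_eq_integral) auto
      finally show "(Qnn ^^ Suc m) (\<lambda>y. ennreal (G y)) x = ennreal ((Qop S P ^^ Suc m) G x)
          \<and> 0 \<le> (Qop S P ^^ Suc m) G x"
        using Suc by (auto intro!: Qop_nonneg)
    qed
  qed
  then show "(Qnn ^^ m) (\<lambda>y. ennreal (G y)) x = ennreal ((Qop S P ^^ m) G x)" "0 \<le> (Qop S P ^^ m) G x"
    using x by auto
qed

lemma Qnn_funpow_le_Qop_funpow:
  assumes g: "g \<in> F"
    and g_nonneg: "\<And>y. y \<in> space S \<Longrightarrow> 0 \<le> g y"
    and \<phi>_le: "\<And>y. y \<in> space S \<Longrightarrow> \<phi> y \<le> ennreal (g y)" and x: "x \<in> space S"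
  shows "(Qnn ^^ m) \<phi> x \<le> ennreal ((Qop S P ^^ m) g x)"
  using Qnn_funpow_mono[where H=\<phi> and H'="\<lambda>y. ennreal (g y)" and m=m, OF \<phi>_le x]
    Qnn_funpow_F(1)[OF g g_nonneg x, of m] by simp

text \<open>For dominated \<open>f\<close>, \<open>Q\<^sup>m f\<close> is computed from the positive and negative parts of \<open>f\<close>,
  which avoids having to know beforehand that each \<open>Q\<^sup>k f\<close> is \<open>Qk\<close>-integrable.\<close>

lemma Qop_funpow_pos_neg:
  assumes f[measurable]: "f \<in> borel_measurable S" and g: "g \<in> F"
    and f_le: "\<And>y. y \<in> space S \<Longrightarrow> \<bar>f y\<bar> \<le> g y" and x: "x \<in> space S"
  shows "(Qop S P ^^ m) f x = enn2real ((Qnn ^^ m) (\<lambda>y. ennreal (max (f y) 0)) x)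
      - enn2real ((Qnn ^^ m) (\<lambda>y. ennreal (max (- f y) 0)) x)"
proof -
  define fp where "fp = (\<lambda>y. ennreal (max (f y) 0))"
  define fm where "fm = (\<lambda>y. ennreal (max (- f y) 0))"
  have [measurable]: "fp \<in> borel_measurable S" "fm \<in> borel_measurable S" unfolding fp_def fm_def by measurable
  have g_nonneg: "0 \<le> g y" if "y \<in> space S" for y
    using f_le[OF that] by linarith
  have bounds: "(Qnn ^^ m) fp x \<le> ennreal ((Qop S P ^^ m) g x)" "(Qnn ^^ m) fm x \<le> ennreal ((Qop S P ^^ m) g x)"
    if x: "x \<in> space S" for x m
    using f_le by (intro Qnn_funpow_le_Qop_funpow[OF g g_nonneg _ x];
        force simp: fp_def fm_def abs_le_iff intro!: ennreal_leI)+
  have fin: "(Qnn ^^ m) fp x < \<top>" "(Qnn ^^ m) fm x < \<top>" if x: "x \<in> space S" for x m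
    using order.strict_trans1[OF bounds(1)[OF x] ennreal_less_top]
      order.strict_trans1[OF bounds(2)[OF x] ennreal_less_top] by simp_all
  have "(Qop S P ^^ m) f x = enn2real ((Qnn ^^ m) fp x) - enn2real ((Qnn ^^ m) fm x)"
    using x
  proof (induct m arbitrary: x)
    case 0
    then show ?case by (cases "0 \<le> f x") (auto simp: fp_def fm_def ennreal_neg)
  next
    case (Suc m)
    have x: "x \<in> space S" by fact
    have "(Qop S P ^^ Suc m) f x = Qop S P (\<lambda>y. enn2real ((Qnn ^^ m) fp y) - enn2real ((Qnn ^^ m) fm y)) x"
      unfolding funpow.simps comp_def by (rule Qop_cong) (use Suc.hyps in auto)
    also have "\<dots> = Qop S P (\<lambda>y. enn2real ((Qnn ^^ m) fp y)) x - Qop S P (\<lambda>y. enn2real ((Qnn ^^ m) fm y)) x"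
      unfolding Qop_def
      by (rule Bochner_Integration.integral_diff; rule Qop_enn2real_Qnn(1)) (use fin x fin[of x "Suc m"] in auto)
    also have "\<dots> = enn2real ((Qnn ^^ Suc m) fp x) - enn2real ((Qnn ^^ Suc m) fm x)"
      using Qop_enn2real_Qnn(2)[of "(Qnn ^^ m) fp" x] Qop_enn2real_Qnn(2)[of "(Qnn ^^ m) fm" x]
        fin x fin[of x "Suc m"] by auto
    finally show ?case .
  qed
  then show ?thesis unfolding fp_def fm_def .
qed

lemma measurable_Qop_funpow:
  assumes [measurable]: "f \<in> borel_measurable S" and g: "g \<in> F" and "\<And>y. y \<in> space S \<Longrightarrow> \<bar>f y\<bar> \<le> g y"
  shows "(Qop S P ^^ m) f \<in> borel_measurable S"
proof -
  have "(\<lambda>x. enn2real ((Qnn ^^ m) (\<lambda>y. ennreal (max (f y) 0)) x)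
      - enn2real ((Qnn ^^ m) (\<lambda>y. ennreal (max (- f y) 0)) x)) \<in> borel_measurable S"
    by measurable
  then show ?thesis
    by (rule measurable_cong[THEN iffD1, rotated]) (use Qop_funpow_pos_neg[OF assms] in auto)
qed

lemma space_nu: "space \<nu> = space S" using sets_eq_imp_space_eq[OF sets_nu] .

lemma integrable_F_X:
  assumes G: "G \<in> F" and G_nonneg: "\<And>y. y \<in> space S \<Longrightarrow> 0 \<le> G y"
  shows "integrable M (\<lambda>\<omega>. G (X j \<omega>))"
proof -
  have [measurable]: "G \<in> borel_measurable S" by (rule F_measurable[OF G])
  define n where "n = length j"
  have "j \<in> Gen n" by (simp add: Gen_def n_def)
  obtain G' where G': "G' \<in> F" "\<forall>x\<in>space S. (Qop S P ^^ n) G x = G' x"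
    using Qop_funpow_in_F[OF G] by auto
  have "(\<integral>\<^sup>+ \<omega>. ennreal (norm (G (X j \<omega>))) \<partial>M) = (\<integral>\<^sup>+ \<omega>. ennreal (G (X j \<omega>)) \<partial>M)"
    using G_nonneg X_in_space by (intro nn_integral_cong) auto
  also have "\<dots> \<le> (\<integral>\<^sup>+ \<omega>. (\<Sum>j\<in>Gen n. ennreal (G (X j \<omega>))) \<partial>M)"
    by (intro nn_integral_mono member_le_sum[OF \<open>j \<in> Gen n\<close>]) auto
  also have "\<dots> = 2 ^ n * (\<integral>\<^sup>+ x. (Qnn ^^ n) (\<lambda>y. ennreal (G y)) x \<partial>\<nu>)"
    by (rule nn_integral_generation) measurable
  also have "(\<integral>\<^sup>+ x. (Qnn ^^ n) (\<lambda>y. ennreal (G y)) x \<partial>\<nu>) = (\<integral>\<^sup>+ x. ennreal (G' x) \<partial>\<nu>)"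
    using Qnn_funpow_F(1)[OF G G_nonneg] G'(2) by (intro nn_integral_cong) (auto simp: space_nu)
  also have "2 ^ n * (\<integral>\<^sup>+ x. ennreal (G' x) \<partial>\<nu>) < \<top>"
  proof -
    have "(\<integral>\<^sup>+ x. ennreal (G' x) \<partial>\<nu>) \<le> (\<integral>\<^sup>+ x. ennreal (norm (G' x)) \<partial>\<nu>)"
      by (intro nn_integral_mono ennreal_leI) auto
    also have "\<dots> < \<top>" using F_integrable_nu[OF G'(1)] by (simp add: integrable_iff_bounded)
    finally show ?thesis by (simp add: ennreal_mult_less_top power_less_top_ennreal)
  qed
  finally show ?thesis by (intro integrableI_bounded) auto
qed

lemma integrable_dominated_X:
  assumes [measurable]: "h \<in> borel_measurable S" and g: "g \<in> F"
    and h_le: "\<And>y. y \<in> space S \<Longrightarrow> \<bar>h y\<bar> \<le> g y"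
  shows "integrable M (\<lambda>\<omega>. h (X j \<omega>))"
proof (rule Bochner_Integration.integrable_bound)
  have "0 \<le> g y" if "y \<in> space S" for y using h_le[OF that] by linarith
  then show "integrable M (\<lambda>\<omega>. g (X j \<omega>))" by (rule integrable_F_X[OF g])
  show "AE \<omega> in M. norm (h (X j \<omega>)) \<le> norm (g (X j \<omega>))"
  proof (rule AE_I2)
    fix \<omega> assume "\<omega> \<in> space M"
    then have "\<bar>h (X j \<omega>)\<bar> \<le> g (X j \<omega>)" using h_le X_in_space by blast
    then show "norm (h (X j \<omega>)) \<le> norm (g (X j \<omega>))" using abs_ge_self[of "g (X j \<omega>)"] by simp
  qed
qed simp

lemma sigma_finite_subalgebra_vimage_X:
  "sigma_finite_subalgebra M (vimage_algebra (space M) (X i) S)"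
proof -
  interpret prob_space M by (rule prob_space_M)
  have "subalgebra M (vimage_algebra (space M) (X i) S)"
    using sets_vimage_X_subset_hist sets_hist_subset by (auto simp: subalgebra_def)
  then have "finite_measure_subalgebra M (vimage_algebra (space M) (X i) S)"
    by unfold_locales
  then show ?thesis by (rule finite_measure_subalgebra_is_sigma_finite)
qed

lemma integrable_enn2real_Qnn_funpow_X:
  assumes [measurable]: "\<phi> \<in> borel_measurable S" and g: "g \<in> F"
    and g_nonneg: "\<And>y. y \<in> space S \<Longrightarrow> 0 \<le> g y"
    and \<phi>_le: "\<And>y. y \<in> space S \<Longrightarrow> \<phi> y \<le> ennreal (g y)"
  shows "integrable M (\<lambda>\<omega>. enn2real ((Qnn ^^ m) \<phi> (X i \<omega>)))"
proof -
  obtain G' where G': "G' \<in> F" "\<forall>x\<in>space S. (Qop S P ^^ m) g x = G' x"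
    using Qop_funpow_in_F[OF g] by auto
  have G'_nonneg: "0 \<le> G' y" if "y \<in> space S" for y
    using Qnn_funpow_F(2)[OF g g_nonneg that, of m] G'(2) that by auto
  show ?thesis
  proof (rule Bochner_Integration.integrable_bound[OF integrable_F_X[OF G'(1) G'_nonneg, of i]])
    show "AE \<omega> in M. norm (enn2real ((Qnn ^^ m) \<phi> (X i \<omega>))) \<le> norm (G' (X i \<omega>))"
    proof (rule AE_I2)
      fix \<omega> assume "\<omega> \<in> space M"
      then have x: "X i \<omega> \<in> space S" by (rule X_in_space)
      then have "(Qnn ^^ m) \<phi> (X i \<omega>) \<le> ennreal (G' (X i \<omega>))"
        using Qnn_funpow_le_Qop_funpow[OF g g_nonneg \<phi>_le x, of m] G'(2) x by simp
      then have "enn2real ((Qnn ^^ m) \<phi> (X i \<omega>)) \<le> G' (X i \<omega>)"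
        by (rule enn2real_leI[OF G'_nonneg[OF x]])
      then show "norm (enn2real ((Qnn ^^ m) \<phi> (X i \<omega>))) \<le> norm (G' (X i \<omega>))"
        using G'_nonneg[OF x] by simp
    qed
  qed measurable
qed

lemma integral_indicator_subtree_nonneg:
  assumes [measurable]: "\<phi> \<in> borel_measurable S" and \<phi>_nonneg: "\<And>y. 0 \<le> \<phi> y"
    and g: "g \<in> F" and \<phi>_le: "\<And>y. y \<in> space S \<Longrightarrow> \<phi> y \<le> g y"
    and i: "length i = k" and A: "A \<in> sets (hist M S X k)"
  shows "(\<integral> \<omega>. indicator A \<omega> * (\<Sum>j\<in>Gen m. \<phi> (X (i @ j) \<omega>)) \<partial>M)
      = (\<integral> \<omega>. indicator A \<omega> * (2 ^ m * enn2real ((Qnn ^^ m) (\<lambda>y. ennreal (\<phi> y)) (X i \<omega>))) \<partial>M)"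
proof (rule integral_eq_if_nn_integral_eq)
  have A_M[measurable]: "A \<in> sets M" using A sets_hist_subset by auto
  have g_nonneg: "0 \<le> g y" if "y \<in> space S" for y using \<phi>_nonneg[of y] \<phi>_le[OF that] by linarith
  have \<phi>_le': "ennreal (\<phi> y) \<le> ennreal (g y)" if "y \<in> space S" for y using \<phi>_le[OF that] by (rule ennreal_leI)
  have Qnn_finite: "(Qnn ^^ m) (\<lambda>y. ennreal (\<phi> y)) x < \<top>" if "x \<in> space S" for x
    using order.strict_trans1[OF Qnn_funpow_le_Qop_funpow[OF g g_nonneg \<phi>_le' that] ennreal_less_top] .
  have int_sum: "integrable M (\<lambda>\<omega>. \<Sum>j\<in>Gen m. \<phi> (X (i @ j) \<omega>))"
    using \<phi>_le \<phi>_nonneg by (intro Bochner_Integration.integrable_sum integrable_dominated_X[OF _ g]) auto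
  show "integrable M (\<lambda>\<omega>. indicator A \<omega> * (\<Sum>j\<in>Gen m. \<phi> (X (i @ j) \<omega>)))"
    using integrable_mult_indicator[OF A_M int_sum] by simp
  show "integrable M (\<lambda>\<omega>. indicator A \<omega> * (2 ^ m * enn2real ((Qnn ^^ m) (\<lambda>y. ennreal (\<phi> y)) (X i \<omega>))))"
    using integrable_mult_indicator[OF A_M integrable_mult_right[OF
        integrable_enn2real_Qnn_funpow_X[OF _ g g_nonneg \<phi>_le', of m i]]] by simp
  show "0 \<le> indicator A \<omega> * (\<Sum>j\<in>Gen m. \<phi> (X (i @ j) \<omega>))" for \<omega>
    using \<phi>_nonneg by (simp add: sum_nonneg)
  show "0 \<le> indicator A \<omega> * (2 ^ m * enn2real ((Qnn ^^ m) (\<lambda>y. ennreal (\<phi> y)) (X i \<omega>)))" for \<omega>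
    by simp
  have two_pow: "ennreal (2 ^ m) = 2 ^ m" by (simp add: ennreal_power[symmetric])
  have "(\<integral>\<^sup>+ \<omega>. ennreal (indicator A \<omega> * (\<Sum>j\<in>Gen m. \<phi> (X (i @ j) \<omega>))) \<partial>M)
      = (\<integral>\<^sup>+ \<omega>. indicator A \<omega> * (\<Sum>j\<in>Gen m. ennreal (\<phi> (X (i @ j) \<omega>))) \<partial>M)"
    using \<phi>_nonneg by (intro nn_integral_cong) (simp add: sum_ennreal split: split_indicator)
  also have "\<dots> = (\<integral>\<^sup>+ \<omega>. indicator A \<omega> * (2 ^ m * (Qnn ^^ m) (\<lambda>y. ennreal (\<phi> y)) (X i \<omega>)) \<partial>M)"
    by (rule nn_integral_indicator_subtree[OF i _ A]) measurable
  also have "\<dots> = (\<integral>\<^sup>+ \<omega>. ennreal (indicator A \<omega> * (2 ^ m * enn2real ((Qnn ^^ m) (\<lambda>y. ennreal (\<phi> y)) (X i \<omega>)))) \<partial>M)"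
    using Qnn_finite X_in_space
    by (intro nn_integral_cong) (simp add: ennreal_mult' two_pow ennreal_enn2real less_top split: split_indicator)
  finally show "(\<integral>\<^sup>+ \<omega>. ennreal (indicator A \<omega> * (\<Sum>j\<in>Gen m. \<phi> (X (i @ j) \<omega>))) \<partial>M)
      = (\<integral>\<^sup>+ \<omega>. ennreal (indicator A \<omega> * (2 ^ m * enn2real ((Qnn ^^ m) (\<lambda>y. ennreal (\<phi> y)) (X i \<omega>)))) \<partial>M)" .
qed

lemma integrable_Qop_funpow_X:
  assumes [measurable]: "f \<in> borel_measurable S" and g: "g \<in> F"
    and f_le: "\<And>y. y \<in> space S \<Longrightarrow> \<bar>f y\<bar> \<le> g y"
  shows "integrable M (\<lambda>\<omega>. (Qop S P ^^ m) f (X i \<omega>))"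
proof -
  have g_nonneg: "0 \<le> g y" if "y \<in> space S" for y using f_le[OF that] by linarith
  have int_diff: "integrable M (\<lambda>\<omega>. enn2real ((Qnn ^^ m) (\<lambda>y. ennreal (max (f y) 0)) (X i \<omega>))
      - enn2real ((Qnn ^^ m) (\<lambda>y. ennreal (max (- f y) 0)) (X i \<omega>)))"
    using f_le by (intro Bochner_Integration.integrable_diff integrable_enn2real_Qnn_funpow_X[OF _ g g_nonneg])
      (auto intro!: ennreal_leI simp: abs_le_iff)
  have Q_eq: "(Qop S P ^^ m) f (X i \<omega>) = enn2real ((Qnn ^^ m) (\<lambda>y. ennreal (max (f y) 0)) (X i \<omega>))
      - enn2real ((Qnn ^^ m) (\<lambda>y. ennreal (max (- f y) 0)) (X i \<omega>))" if "\<omega> \<in> space M" for \<omega>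
    using Qop_funpow_pos_neg[OF assms(1) g f_le X_in_space[OF that]] .
  show ?thesis
    by (rule Bochner_Integration.integrable_cong[THEN iffD2, OF refl _ int_diff]) (rule Q_eq)
qed

text \<open>Obtained from the nonnegative case through positive and negative parts.\<close>

lemma integral_indicator_subtree:
  assumes [measurable]: "f \<in> borel_measurable S" and g: "g \<in> F"
    and f_le: "\<And>y. y \<in> space S \<Longrightarrow> \<bar>f y\<bar> \<le> g y"
    and i: "length i = k" and A: "A \<in> sets (hist M S X k)"
  shows "(\<integral> \<omega>. indicator A \<omega> * (\<Sum>j\<in>Gen m. f (X (i @ j) \<omega>)) \<partial>M)
     = (\<integral> \<omega>. indicator A \<omega> * (2 ^ m * (Qop S P ^^ m) f (X i \<omega>)) \<partial>M)"
proof -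
  have A_M[measurable]: "A \<in> sets M" using A sets_hist_subset by auto
  have g_nonneg: "0 \<le> g y" if "y \<in> space S" for y using f_le[OF that] by linarith
  define fp where "fp y = max (f y) 0" for y
  define fm where "fm y = max (- f y) 0" for y
  have parts_meas[measurable]: "fp \<in> borel_measurable S" "fm \<in> borel_measurable S"
    unfolding fp_def fm_def by measurable
  have parts_nonneg: "0 \<le> fp y" "0 \<le> fm y" for y by (auto simp: fp_def fm_def)
  have parts_le: "fp y \<le> g y" "fm y \<le> g y" if "y \<in> space S" for y
    using f_le[OF that] by (auto simp: fp_def fm_def)
  define a where "a = (\<lambda>\<omega>. enn2real ((Qnn ^^ m) (\<lambda>y. ennreal (fp y)) (X i \<omega>)))"
  define b where "b = (\<lambda>\<omega>. enn2real ((Qnn ^^ m) (\<lambda>y. ennreal (fm y)) (X i \<omega>)))"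
  have int_a: "integrable M a" and int_b: "integrable M b"
    unfolding a_def b_def using parts_le
    by (intro integrable_enn2real_Qnn_funpow_X[OF _ g g_nonneg]; force intro!: ennreal_leI)+
  have int_ab: "integrable M (\<lambda>\<omega>. indicator A \<omega> * (2 ^ m * a \<omega>))"
    "integrable M (\<lambda>\<omega>. indicator A \<omega> * (2 ^ m * b \<omega>))"
    using integrable_mult_indicator[OF A_M integrable_mult_right[OF int_a]]
      integrable_mult_indicator[OF A_M integrable_mult_right[OF int_b]] by simp_all
  have int_sum: "integrable M (\<lambda>\<omega>. indicator A \<omega> * (\<Sum>j\<in>Gen m. h (X (i @ j) \<omega>)))"
    if [measurable]: "h \<in> borel_measurable S" and "\<And>y. y \<in> space S \<Longrightarrow> \<bar>h y\<bar> \<le> g y" for h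
  proof -
    have "integrable M (\<lambda>\<omega>. \<Sum>j\<in>Gen m. h (X (i @ j) \<omega>))"
      using that by (intro Bochner_Integration.integrable_sum integrable_dominated_X[OF _ g]) auto
    from integrable_mult_indicator[OF A_M this] show ?thesis by simp
  qed
  have "fp y - fm y = f y" for y by (simp add: fp_def fm_def max_def)
  then have sum_f: "(\<Sum>j\<in>Gen m. f (X (i @ j) \<omega>))
      = (\<Sum>j\<in>Gen m. fp (X (i @ j) \<omega>)) - (\<Sum>j\<in>Gen m. fm (X (i @ j) \<omega>))" for \<omega>
    by (simp add: sum_subtractf[symmetric])
  have "(\<integral> \<omega>. indicator A \<omega> * (\<Sum>j\<in>Gen m. f (X (i @ j) \<omega>)) \<partial>M)
      = (\<integral> \<omega>. indicator A \<omega> * (\<Sum>j\<in>Gen m. fp (X (i @ j) \<omega>))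
          - indicator A \<omega> * (\<Sum>j\<in>Gen m. fm (X (i @ j) \<omega>)) \<partial>M)"
    by (simp add: sum_f right_diff_distrib)
  also have "\<dots> = (\<integral> \<omega>. indicator A \<omega> * (\<Sum>j\<in>Gen m. fp (X (i @ j) \<omega>)) \<partial>M)
      - (\<integral> \<omega>. indicator A \<omega> * (\<Sum>j\<in>Gen m. fm (X (i @ j) \<omega>)) \<partial>M)"
    using parts_le by (intro Bochner_Integration.integral_diff int_sum) (auto simp: fp_def fm_def)
  also have "\<dots> = (\<integral> \<omega>. indicator A \<omega> * (2 ^ m * a \<omega>) \<partial>M) - (\<integral> \<omega>. indicator A \<omega> * (2 ^ m * b \<omega>) \<partial>M)"
    unfolding a_def b_def
    using integral_indicator_subtree_nonneg[OF parts_meas(1) parts_nonneg(1) g parts_le(1) i A]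
      integral_indicator_subtree_nonneg[OF parts_meas(2) parts_nonneg(2) g parts_le(2) i A] by simp
  also have "\<dots> = (\<integral> \<omega>. indicator A \<omega> * (2 ^ m * (Qop S P ^^ m) f (X i \<omega>)) \<partial>M)"
    unfolding Bochner_Integration.integral_diff[OF int_ab, symmetric]
    using Qop_funpow_pos_neg[OF assms(1) g f_le X_in_space]
    by (intro Bochner_Integration.integral_cong refl) (simp add: a_def b_def fp_def fm_def right_diff_distrib)
  finally show ?thesis .
qed

lemma cond_exp_subtree_centered:
  assumes [measurable]: "f \<in> borel_measurable S" and g: "g \<in> F"
    and f_le: "\<And>y. y \<in> space S \<Longrightarrow> \<bar>f y\<bar> \<le> g y"
  shows "AE \<omega> in M. real_cond_exp M (vimage_algebra (space M) (X i) S)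
      (\<lambda>\<omega>. \<Sum>j\<in>Gen m. f (X (i @ j) \<omega>) - c) \<omega> = 2 ^ m * ((Qop S P ^^ m) f (X i \<omega>) - c)"
proof -
  define V where "V = vimage_algebra (space M) (X i) S"
  interpret prob_space M by (rule prob_space_M)
  interpret sigma_finite_subalgebra M V unfolding V_def by (rule sigma_finite_subalgebra_vimage_X)
  have int_const: "integrable M (\<lambda>_. 2 ^ m * c)" by simp
  have [measurable]: "X i \<in> V \<rightarrow>\<^sub>M S" unfolding V_def
    by (rule measurable_vimage_algebra1) (use X_in_space in auto)
  have [measurable]: "(Qop S P ^^ m) f \<in> borel_measurable S" by (rule measurable_Qop_funpow[OF _ g f_le]) simp
  have sum_eq: "(\<Sum>j\<in>Gen m. f (X (i @ j) \<omega>) - c) = (\<Sum>j\<in>Gen m. f (X (i @ j) \<omega>)) - 2 ^ m * c" for \<omega>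
    by (simp add: sum_subtractf card_Gen)
  have int_sum: "integrable M (\<lambda>\<omega>. \<Sum>j\<in>Gen m. f (X (i @ j) \<omega>))"
    using f_le by (intro Bochner_Integration.integrable_sum integrable_dominated_X[OF _ g]) auto
  note int_Q = integrable_Qop_funpow_X[OF assms(1) g f_le, of m i]
  show ?thesis unfolding V_def[symmetric]
  proof (rule real_cond_exp_charact)
    fix A assume "A \<in> sets V"
    then have A: "A \<in> sets (hist M S X (length i))"
      using sets_vimage_X_subset_hist unfolding V_def by auto
    then have A_M: "A \<in> sets M" using sets_hist_subset by auto
    have "(\<integral> \<omega>\<in>A. (\<Sum>j\<in>Gen m. f (X (i @ j) \<omega>) - c) \<partial>M)
        = (\<integral> \<omega>. indicator A \<omega> * (\<Sum>j\<in>Gen m. f (X (i @ j) \<omega>)) \<partial>M) - (\<integral> \<omega>. indicator A \<omega> * (2 ^ m * c) \<partial>M)"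
      unfolding set_lebesgue_integral_def sum_eq
      using integrable_mult_indicator[OF A_M int_sum] integrable_mult_indicator[OF A_M int_const]
      by (subst Bochner_Integration.integral_diff[symmetric]) (auto simp: right_diff_distrib)
    also have "\<dots> = (\<integral> \<omega>. indicator A \<omega> * (2 ^ m * (Qop S P ^^ m) f (X i \<omega>)) \<partial>M)
        - (\<integral> \<omega>. indicator A \<omega> * (2 ^ m * c) \<partial>M)"
      using integral_indicator_subtree[OF assms(1) g f_le refl A] by simp
    also have "\<dots> = (\<integral> \<omega>\<in>A. 2 ^ m * ((Qop S P ^^ m) f (X i \<omega>) - c) \<partial>M)"
      unfolding set_lebesgue_integral_def
      using integrable_mult_indicator[OF A_M integrable_mult_right[OF int_Q]]
        integrable_mult_indicator[OF A_M int_const]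
      by (subst Bochner_Integration.integral_diff[symmetric]) (auto simp: right_diff_distrib)
    finally show "(\<integral> \<omega>\<in>A. (\<Sum>j\<in>Gen m. f (X (i @ j) \<omega>) - c) \<partial>M)
        = (\<integral> \<omega>\<in>A. 2 ^ m * ((Qop S P ^^ m) f (X i \<omega>) - c) \<partial>M)" .
  next
    show "integrable M (\<lambda>\<omega>. \<Sum>j\<in>Gen m. f (X (i @ j) \<omega>) - c)"
      unfolding sum_eq using int_sum by simp
    show "integrable M (\<lambda>\<omega>. 2 ^ m * ((Qop S P ^^ m) f (X i \<omega>) - c))"
      using int_Q by simp
    show "(\<lambda>\<omega>. 2 ^ m * ((Qop S P ^^ m) f (X i \<omega>) - c)) \<in> borel_measurable V"
      by measurable
  qed
qed

lemma cond_exp_Nni: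
  assumes [measurable]: "\<And>l. f l \<in> borel_measurable S" and g: "g \<in> F"
    and f_le: "\<And>l x. x \<in> space S \<Longrightarrow> \<bar>f l x\<bar> \<le> g x"
  shows "AE \<omega> in M. real_cond_exp M (vimage_algebra (space M) (X i) S) (Nni \<mu> X f n i) \<omega>
     = (1 / sqrt (2 ^ n)) * (\<Sum>l\<in>{0..n - length i}. 2 ^ (n - length i - l) *
          ((Qop S P ^^ (n - length i - l)) (f l) (X i \<omega>) - (\<integral> y. f l y \<partial>\<mu>)))"
proof -
  define V where "V = vimage_algebra (space M) (X i) S"
  define q where "q = n - length i"
  define c where "c l = (\<integral> y. f l y \<partial>\<mu>)" for l
  define T where "T l \<omega> = (\<Sum>j\<in>Gen (q - l). f l (X (i @ j) \<omega>) - c l)" for l \<omega>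
  interpret prob_space M by (rule prob_space_M)
  interpret sigma_finite_subalgebra M V unfolding V_def by (rule sigma_finite_subalgebra_vimage_X)
  have int_T: "integrable M (T l)" for l
    unfolding T_def using f_le
    by (intro Bochner_Integration.integrable_sum Bochner_Integration.integrable_diff)
      (auto intro: integrable_dominated_X[OF _ g])
  have "Nni \<mu> X f n i = (\<lambda>\<omega>. (1 / sqrt (2 ^ n)) * (\<Sum>l\<in>{0..q}. T l \<omega>))"
    unfolding Nni_def T_def MA_image_append q_def c_def ..
  then have "AE \<omega> in M. real_cond_exp M V (Nni \<mu> X f n i) \<omega>
      = (1 / sqrt (2 ^ n)) * real_cond_exp M V (\<lambda>\<omega>. \<Sum>l\<in>{0..q}. T l \<omega>) \<omega>"
    using int_T by (simp add: real_cond_exp_cmult)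
  moreover have "AE \<omega> in M. real_cond_exp M V (\<lambda>\<omega>. \<Sum>l\<in>{0..q}. T l \<omega>) \<omega>
      = (\<Sum>l\<in>{0..q}. real_cond_exp M V (T l) \<omega>)"
    using int_T by (rule real_cond_exp_sum)
  moreover have "AE \<omega> in M. \<forall>l\<in>{0..q}. real_cond_exp M V (T l) \<omega>
      = 2 ^ (q - l) * ((Qop S P ^^ (q - l)) (f l) (X i \<omega>) - c l)"
    unfolding T_def V_def using f_le by (intro AE_finite_allI cond_exp_subtree_centered[OF _ g]) auto
  ultimately show ?thesis
    unfolding V_def[symmetric] q_def[symmetric] c_def[symmetric] by eventually_elim simp
qed

lemma integral_generation_square_le:
  assumes g: "g \<in> F" and h: "h \<in> F"
    and h_bound: "\<And>k x. x \<in> space S \<Longrightarrow> \<bar>(Qop S P ^^ k) (\<lambda>x. (g x)\<^sup>2) x - c\<bar> \<le> \<alpha> ^ k * h x"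
    and \<alpha>: "0 \<le> \<alpha>" "\<alpha> \<le> 1"
  shows "(\<integral> \<omega>. (\<Sum>i\<in>Gen k. (g (X i \<omega>))\<^sup>2) \<partial>M) \<le> 2 ^ k * (\<integral> x. \<bar>c\<bar> + \<bar>h x\<bar> \<partial>\<nu>)"
proof -
  define G where "G = (\<lambda>x. (g x)\<^sup>2)"
  have G_F: "G \<in> F" unfolding G_def by (rule F_square[OF g])
  have G_nonneg: "\<And>y. 0 \<le> G y" by (simp add: G_def)
  have [measurable]: "G \<in> borel_measurable S" "h \<in> borel_measurable S"
    using F_measurable G_F h by auto
  interpret nu: prob_space \<nu> by (rule prob_space_nu)
  define C where "C = (\<integral> x. \<bar>c\<bar> + \<bar>h x\<bar> \<partial>\<nu>)"
  have C_nonneg: "0 \<le> C" unfolding C_def by (intro integral_nonneg_AE) auto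
  have int_sum: "integrable M (\<lambda>\<omega>. \<Sum>i\<in>Gen k. G (X i \<omega>))"
    using integrable_F_X[OF G_F] G_nonneg by auto
  have QG_le: "(Qop S P ^^ k) G x \<le> \<bar>c\<bar> + \<bar>h x\<bar>" if "x \<in> space S" for x
  proof -
    have "\<alpha> ^ k * h x \<le> \<alpha> ^ k * \<bar>h x\<bar>" using \<alpha> by (intro mult_left_mono) auto
    also have "\<dots> \<le> 1 * \<bar>h x\<bar>" using \<alpha> by (intro mult_right_mono power_le_one) auto
    finally
    show ?thesis using h_bound[OF that, of k] unfolding G_def by auto
  qed
  have "ennreal (\<integral> \<omega>. (\<Sum>i\<in>Gen k. G (X i \<omega>)) \<partial>M) = (\<integral>\<^sup>+ \<omega>. (\<Sum>i\<in>Gen k. ennreal (G (X i \<omega>))) \<partial>M)"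
    using int_sum G_nonneg
    by (subst nn_integral_eq_integral[symmetric]) (auto intro!: sum_nonneg nn_integral_cong)
  also have "\<dots> = 2 ^ k * (\<integral>\<^sup>+ x. (Qnn ^^ k) (\<lambda>y. ennreal (G y)) x \<partial>\<nu>)"
    by (rule nn_integral_generation) measurable
  also have "(\<integral>\<^sup>+ x. (Qnn ^^ k) (\<lambda>y. ennreal (G y)) x \<partial>\<nu>) \<le> (\<integral>\<^sup>+ x. ennreal (\<bar>c\<bar> + \<bar>h x\<bar>) \<partial>\<nu>)"
    using Qnn_funpow_F(1)[OF G_F G_nonneg] QG_le
    by (intro nn_integral_mono) (auto simp: space_nu ennreal_plus[symmetric] ennreal_leI simp del: ennreal_plus)
  also have "(\<integral>\<^sup>+ x. ennreal (\<bar>c\<bar> + \<bar>h x\<bar>) \<partial>\<nu>) = ennreal C"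
    unfolding C_def using F_integrable_nu[OF h] by (intro nn_integral_eq_integral) auto
  finally have "ennreal (\<integral> \<omega>. (\<Sum>i\<in>Gen k. G (X i \<omega>)) \<partial>M) \<le> ennreal (2 ^ k * C)"
    by (simp add: mult_left_mono ennreal_mult' ennreal_power[symmetric])
  then show ?thesis using C_nonneg unfolding C_def[symmetric] G_def by (simp add: ennreal_le_iff)
qed

lemma AE_R2_le:
  assumes [measurable]: "\<And>l. f l \<in> borel_measurable S" and g: "g \<in> F"
    and f_le: "\<And>l x. x \<in> space S \<Longrightarrow> \<bar>f l x\<bar> \<le> g x"
    and f_geom: "\<And>m l x. x \<in> space S \<Longrightarrow> \<bar>(Qop S P ^^ m) (f l) x - (\<integral> y. f l y \<partial>\<mu>)\<bar> \<le> \<alpha> ^ m * g x"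
    and \<alpha>: "0 \<le> \<alpha>" and p_le: "p n \<le> n"
  shows "AE \<omega> in M. R2 M S \<mu> X f p n \<omega> \<le> (real (p n) + 1)\<^sup>2 * max (2 * \<alpha>) 1 ^ (2 * p n) / 2 ^ n
      * (\<Sum>i\<in>Gen (n - p n). (g (X i \<omega>))\<^sup>2)"
proof -
  define q where "q = p n"
  define K where "K = (real q + 1)\<^sup>2 * max (2 * \<alpha>) 1 ^ (2 * q) / 2 ^ n"
  define Y where "Y i \<omega> = (1 / sqrt (2 ^ n)) * (\<Sum>l\<in>{0..q}.
      2 ^ (q - l) * ((Qop S P ^^ (q - l)) (f l) (X i \<omega>) - (\<integral> y. f l y \<partial>\<mu>)))" for i \<omega>
  have g_nonneg: "0 \<le> g y" if "y \<in> space S" for y using f_le[OF that] by (meson abs_ge_zero order.trans)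
  have "AE \<omega> in M. \<forall>i\<in>Gen (n - q).
      real_cond_exp M (vimage_algebra (space M) (X i) S) (Nni \<mu> X f n i) \<omega> = Y i \<omega>"
  proof (rule AE_finite_allI)
    fix i assume "i \<in> Gen (n - q)"
    then have "n - length i = q" using p_le by (simp add: Gen_def q_def)
    then show "AE \<omega> in M. real_cond_exp M (vimage_algebra (space M) (X i) S) (Nni \<mu> X f n i) \<omega> = Y i \<omega>"
      using cond_exp_Nni[OF _ g f_le, where \<mu>=\<mu> and n=n and i=i] by (simp add: Y_def)
  qed simp
  with AE_space show ?thesis
  proof eventually_elim
    case (elim \<omega>)
    have "(Y i \<omega>)\<^sup>2 \<le> K * (g (X i \<omega>))\<^sup>2" for i
      unfolding Y_def K_def using X_in_space[OF elim(1)] \<alpha>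
      by (intro square_weighted_geometric_sum_le f_geom g_nonneg) auto
    then have "(\<Sum>i\<in>Gen (n - q). (Y i \<omega>)\<^sup>2) \<le> K * (\<Sum>i\<in>Gen (n - q). (g (X i \<omega>))\<^sup>2)"
      by (simp add: sum_distrib_left sum_mono)
    then show ?case using elim(2) by (simp add: R2_def K_def q_def)
  qed
qed

lemma integral_R2_le:
  assumes [measurable]: "\<And>l. f l \<in> borel_measurable S" and g: "g \<in> F"
    and f_le: "\<And>l x. x \<in> space S \<Longrightarrow> \<bar>f l x\<bar> \<le> g x"
    and f_geom: "\<And>m l x. x \<in> space S \<Longrightarrow> \<bar>(Qop S P ^^ m) (f l) x - (\<integral> y. f l y \<partial>\<mu>)\<bar> \<le> \<alpha> ^ m * g x"
    and \<alpha>: "0 \<le> \<alpha>" "\<alpha> \<le> 1" and h: "h \<in> F"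
    and h_bound: "\<And>k x. x \<in> space S \<Longrightarrow> \<bar>(Qop S P ^^ k) (\<lambda>x. (g x)\<^sup>2) x - c\<bar> \<le> \<alpha> ^ k * h x"
    and p_le: "p n \<le> n"
  shows "(\<integral> \<omega>. R2 M S \<mu> X f p n \<omega> \<partial>M)
    \<le> (\<integral> x. \<bar>c\<bar> + \<bar>h x\<bar> \<partial>\<nu>) * (real (p n) + 1)\<^sup>2 * ((max (2 * \<alpha>) 1)\<^sup>2 / 2) ^ p n"
proof -
  define q where "q = p n"
  define k where "k = n - q"
  define \<theta> where "\<theta> = max (2 * \<alpha>) 1"
  define K where "K = (real q + 1)\<^sup>2 * \<theta> ^ (2 * q) / 2 ^ n"
  define C where "C = (\<integral> x. \<bar>c\<bar> + \<bar>h x\<bar> \<partial>\<nu>)"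
  have n_eq: "n = k + q" using p_le by (simp add: k_def q_def)
  have K_nonneg: "0 \<le> K" by (simp add: K_def)
  have "integrable M (\<lambda>\<omega>. (g (X i \<omega>))\<^sup>2)" for i
    using integrable_F_X[OF F_square[OF g]] by simp
  then have int_bound: "integrable M (\<lambda>\<omega>. K * (\<Sum>i\<in>Gen k. (g (X i \<omega>))\<^sup>2))" by auto
  have AE_le: "AE \<omega> in M. R2 M S \<mu> X f p n \<omega> \<le> K * (\<Sum>i\<in>Gen k. (g (X i \<omega>))\<^sup>2)"
    unfolding K_def k_def q_def \<theta>_def
    by (rule AE_R2_le[where f=f and p=p and n=n, OF assms(1) g f_le f_geom \<alpha>(1) p_le])
  have "AE \<omega> in M. 0 \<le> K * (\<Sum>i\<in>Gen k. (g (X i \<omega>))\<^sup>2)"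
    by (intro AE_I2 mult_nonneg_nonneg K_nonneg sum_nonneg) simp
  with int_bound AE_le
  have "(\<integral> \<omega>. R2 M S \<mu> X f p n \<omega> \<partial>M) \<le> (\<integral> \<omega>. K * (\<Sum>i\<in>Gen k. (g (X i \<omega>))\<^sup>2) \<partial>M)"
    by (rule integral_mono_AE')
  also have "\<dots> = K * (\<integral> \<omega>. (\<Sum>i\<in>Gen k. (g (X i \<omega>))\<^sup>2) \<partial>M)" by simp
  also have "\<dots> \<le> K * (2 ^ k * C)"
    unfolding C_def using K_nonneg integral_generation_square_le[OF g h h_bound \<alpha>]
    by (intro mult_left_mono) auto
  also have "\<dots> = C * (real q + 1)\<^sup>2 * (\<theta>\<^sup>2 / 2) ^ q"
    using power_mult[of \<theta> 2 q, symmetric] unfolding K_def n_eq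
    by (simp add: power_add power_mult power_divide field_simps)
  finally show ?thesis by (simp add: q_def \<theta>_def C_def)
qed

end

theorem lemma4p3:
  fixes M :: "'w measure" and S :: "'s measure" and \<nu> \<mu> :: "'s measure"
    and P :: "'s \<Rightarrow> ('s \<times> 's) measure" and X :: "bool list \<Rightarrow> 'w \<Rightarrow> 's"
    and F :: "('s \<Rightarrow> real) set" and \<alpha> :: real
    and f :: "nat \<Rightarrow> 's \<Rightarrow> real" and g :: "'s \<Rightarrow> real" and p :: "nat \<Rightarrow> nat"
  assumes kernel: "P \<in> S \<rightarrow>\<^sub>M prob_algebra (S \<Otimes>\<^sub>M S)"
    and nu: "prob_space \<nu>" "sets \<nu> = sets S"
    and bmc: "BMC M S \<nu> P X"
    and F: "assumption_F S \<nu> P F"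
    and F2: "assumption_F2 S P F \<mu> \<alpha>"
    and alpha: "0 < \<alpha>" "\<alpha> < 1 / sqrt 2"
    and fF: "\<forall>l. f l \<in> F"
    and gF: "g \<in> F"
    and fbound: "\<forall>n l. \<forall>x\<in>space S. \<bar>(Qop S P ^^ n) (f l) x\<bar> \<le> g x"
    and fgeom: "\<forall>n l. \<forall>x\<in>space S. \<bar>(Qop S P ^^ n) (f l) x - (\<integral> y. f l y \<partial>\<mu>)\<bar> \<le> \<alpha> ^ n * g x"
    and p_mono: "mono p"
    and p_pos: "\<forall>n. 0 < p n"
    and p_less: "\<forall>n\<ge>2. p n < n"
    and p_ratio: "(\<lambda>n. real (p n) / real n) \<longlonglongrightarrow> 1"
    and p_gap: "\<forall>c>0. filterlim (\<lambda>n. real n - real (p n) - c * ln (real n)) at_top sequentially"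
  shows "(\<lambda>n. \<integral> \<omega>. R2 M S \<mu> X f p n \<omega> \<partial>M) \<longlonglongrightarrow> 0"
proof -
  have "bmc_F S P M \<nu> X F"
    unfolding bmc_F_def bmc_F_axioms_def bmc_process_def bmc_process_axioms_def binary_kernel_def
    using kernel bmc F nu by blast
  then interpret bmc_F S P M \<nu> X F .
  have f_le: "\<And>l x. x \<in> space S \<Longrightarrow> \<bar>f l x\<bar> \<le> g x" using fbound[rule_format, of _ 0] by simp
  obtain h where h: "h \<in> F"
    "\<And>n x. x \<in> space S \<Longrightarrow> \<bar>(Qop S P ^^ n) (\<lambda>x. (g x)\<^sup>2) x - (\<integral> y. (g y)\<^sup>2 \<partial>\<mu>)\<bar> \<le> \<alpha> ^ n * h x"
    using F2 F_square[OF gF] unfolding assumption_F2_def by blast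
  define C where "C = (\<integral> x. \<bar>\<integral> y. (g y)\<^sup>2 \<partial>\<mu>\<bar> + \<bar>h x\<bar> \<partial>\<nu>)"
  define r where "r = (max (2 * \<alpha>) 1)\<^sup>2 / 2"
  have upper: "eventually (\<lambda>n. (\<integral> \<omega>. R2 M S \<mu> X f p n \<omega> \<partial>M) \<le> C * (real (p n) + 1)\<^sup>2 * r ^ p n) sequentially"
    using F2 p_less fF fgeom alpha unfolding C_def r_def assumption_F2_def
    by (intro eventually_sequentiallyI[of 2] integral_R2_le[OF _ gF f_le _ _ _ h])
      (auto simp: F_measurable less_imp_le)
  have upper_lim: "(\<lambda>n. C * (real (p n) + 1)\<^sup>2 * r ^ p n) \<longlonglongrightarrow> 0"
    using max_double_square_half_less_1[OF alpha] unfolding r_def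
    by (intro filterlim_compose[OF tendsto_square_times_power_0
          filterlim_at_top_if_ratio_tendsto_1[OF p_ratio]]) auto
  have lower: "eventually (\<lambda>n. 0 \<le> (\<integral> \<omega>. R2 M S \<mu> X f p n \<omega> \<partial>M)) sequentially"
    by (intro always_eventually allI integral_nonneg_AE) (auto simp: R2_def intro!: sum_nonneg)
  show ?thesis by (rule tendsto_sandwich[OF lower upper tendsto_const upper_lim])
qed

end
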